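(* Let $n\ge m\ge 2$ be integers. Consider any optimal solution of the shifting-checkers game with $n$ black and $m$ white checkers whose first move is the slide of the white checker at position $n+2$ to the left into position $n+1$. For $1\le t\le m$ define $$\nu_t=\begin{cases} w^{t}(wb)^{m-t}Ob^{n-m+t} & n+t \text{ even},\\ w^{t}O(wb)^{m-t}b^{n-m+t} & n+t\text{ odd}\end{cases}$$ (so $\nu_m=w^mOb^n$). Then this optimal solution passes through all of the configurations $\nu_1,\dots,\nu_m$, and for each $1\le i\le m-1$ the portion of the move sequence leading from $\nu_i$ to $\nu_{i+1}$ is the same for all such optimal solutions (the shortest path from $\nu_i$ to $\nu_{i+1}$ is unique).
   Context: The game: positions $1,\dots,n+m+1$ in a row, each holding a black checker ($b$), a white checker ($w$) or nothing, with exactly one empty position (the vacancy $O$); configurations are written as words over $\{b,w,O\}$, exponents denoting repetition. Initial configuration $b^nOw^m$, final configuration $w^mOb^n$. A legal move is a slide (a checker adjacent to the vacancy moves into it) or a jump (a checker at distance two from the vacancy jumps over the checker between them into it), in either direction. An optimal solution is a sequence of legal moves from the initial to the final configuration of minimum length (this minimum is $nm+n+m$). *)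

theory Defs
  imports Main
begin

text \<open>Cells of the board: black checker, white checker, or the vacancy Vac.
  A configuration is the list of cells at positions 1..n+m+1 (list index i = position i+1).\<close>
datatype cell = Blk | Wht | Vac

type_synonym config = "cell list"

definition legal_move :: "config \<Rightarrow> config \<Rightarrow> bool" where
  "legal_move c c' \<longleftrightarrow>
     (\<exists>i j. i < length c \<and> j < length c \<and> c ! i = Vac \<and> c ! j \<noteq> Vac \<and>
        (j = i + 1 \<or> i = j + 1 \<or>
         (j = i + 2 \<and> c ! (i + 1) \<noteq> Vac) \<or> (i = j + 2 \<and> c ! (j + 1) \<noteq> Vac)) \<and>
        c' = c[i := c ! j, j := Vac])"

definition init_config :: "nat \<Rightarrow> nat \<Rightarrow> config" where
  "init_config n m = replicate n Blk @ [Vac] @ replicate m Wht"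

definition final_config :: "nat \<Rightarrow> nat \<Rightarrow> config" where
  "final_config n m = replicate m Wht @ [Vac] @ replicate n Blk"

text \<open>A solution is a sequence of configurations, starting at the initial and ending at the
  final configuration, consecutive ones related by a legal move.  Its number of moves is
  length - 1.\<close>
definition is_path :: "config list \<Rightarrow> bool" where
  "is_path p \<longleftrightarrow> p \<noteq> [] \<and> (\<forall>k. Suc k < length p \<longrightarrow> legal_move (p ! k) (p ! Suc k))"

definition solution :: "nat \<Rightarrow> nat \<Rightarrow> config list \<Rightarrow> bool" where
  "solution n m p \<longleftrightarrow> is_path p \<and> hd p = init_config n m \<and> last p = final_config n m"

definition optimal_solution :: "nat \<Rightarrow> nat \<Rightarrow> config list \<Rightarrow> bool" where
  "optimal_solution n m p \<longleftrightarrow> solution n m p \<and> (\<forall>q. solution n m q \<longrightarrow> length p \<le> length q)"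

definition wb_pow :: "nat \<Rightarrow> config" where
  "wb_pow k = concat (replicate k [Wht, Blk])"

definition nu :: "nat \<Rightarrow> nat \<Rightarrow> nat \<Rightarrow> config" where
  "nu n m t = (if even (n + t)
     then replicate t Wht @ wb_pow (m - t) @ [Vac] @ replicate (n - m + t) Blk
     else replicate t Wht @ [Vac] @ wb_pow (m - t) @ replicate (n - m + t) Blk)"

text \<open>Configuration after the first move: the white checker at position n+2 slides left
  into position n+1, giving b^n w Vac w^(m-1).\<close>
definition first_move_config :: "nat \<Rightarrow> nat \<Rightarrow> config" where
  "first_move_config n m = replicate n Blk @ [Wht, Vac] @ replicate (m - 1) Wht"

end

theory Submission
  imports Defs
begin

text \<open>Two potentials, \<open>phi\<close> and \<open>psi\<close>, change by at most one per move and always sum to at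
  least \<open>nm + n + m\<close>; \<open>phi\<close> falls from \<open>nm + n + m\<close> to \<open>0\<close> and \<open>psi\<close> rises from \<open>0\<close> to
  \<open>nm + n + m\<close> between the initial and the final configuration.  So along an optimal solution
  every configuration is tight (the sum is minimal) and every move lowers \<open>phi\<close> and raises
  \<open>psi\<close> by one.  Tight configurations are rigid: pairs of checkers on diagonals below the
  height of the vacancy are passed, those above are not, and apart from the initial
  configuration at most one move out of a tight configuration has this effect.  Hence the
  optimal solution with the prescribed first move is unique; it is the explicit solution built
  stage by stage, which passes through \<open>\<nu>\<^sub>1, \<dots>, \<nu>\<^sub>m\<close> in this order.\<close>

definition insert_vac :: "cell list \<Rightarrow> nat \<Rightarrow> config" where
  "insert_vac ws g = take g ws @ Vac # drop g ws"

definition swap_at :: "cell list \<Rightarrow> nat \<Rightarrow> cell list" where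
  "swap_at ws p = ws[p := ws ! Suc p, Suc p := ws ! p]"

lemma length_insert_vac [simp]: "g \<le> length ws \<Longrightarrow> length (insert_vac ws g) = Suc (length ws)"
  by (simp add: insert_vac_def)

lemma nth_insert_vac:
  "g \<le> length ws \<Longrightarrow> k < Suc (length ws) \<Longrightarrow>
   insert_vac ws g ! k = (if k < g then ws ! k else if k = g then Vac else ws ! (k - 1))"
  by (auto simp: insert_vac_def nth_append min_def nth_Cons' split: nat.splits)

lemma insert_vac_append: "insert_vac (A @ B) (length A) = A @ Vac # B"
  by (simp add: insert_vac_def)

lemma insert_vac_eqI:
  "length c = Suc (length ws) \<Longrightarrow> g \<le> length ws \<Longrightarrow>
   (\<And>k. k < Suc (length ws) \<Longrightarrow> c ! k = (if k < g then ws ! k else if k = g then Vac else ws ! (k - 1)))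
   \<Longrightarrow> c = insert_vac ws g"
  by (rule nth_equalityI) (auto simp: nth_insert_vac)

lemma nth_insert_vac_eq_Vac:
  assumes "Vac \<notin> set ws" "g \<le> length ws" "i < Suc (length ws)" "insert_vac ws g ! i = Vac"
  shows "i = g"
proof (rule ccontr)
  assume "i \<noteq> g"
  then have "insert_vac ws g ! i \<in> set ws"
    using assms(2,3) by (auto simp: nth_insert_vac intro!: nth_mem)
  then show False using assms by simp
qed

lemma nth_not_Vac: "Vac \<notin> set ws \<Longrightarrow> k < length ws \<Longrightarrow> ws ! k \<noteq> Vac"
  using nth_mem by force

lemma length_swap_at [simp]: "length (swap_at ws p) = length ws"
  by (simp add: swap_at_def)

lemma nth_swap_at:
  "Suc p < length ws \<Longrightarrow>
   swap_at ws p ! i = (if i = p then ws ! Suc p else if i = Suc p then ws ! p else ws ! i)"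
  by (auto simp: swap_at_def nth_list_update)

lemma swap_at_same: "Suc p < length ws \<Longrightarrow> ws ! p = ws ! Suc p \<Longrightarrow> swap_at ws p = ws"
  by (rule nth_equalityI) (auto simp: nth_swap_at)

lemma swap_at_swap_at: "Suc p < length ws \<Longrightarrow> swap_at (swap_at ws p) p = ws"
  by (rule nth_equalityI) (auto simp: nth_swap_at)

lemma swap_at_append: "swap_at (A @ x # y # B) (length A) = A @ y # x # B"
  by (rule nth_equalityI)
    (auto simp: swap_at_def nth_append nth_list_update nth_Cons' split: nat.splits)

lemma set_swap_at: "Suc p < length ws \<Longrightarrow> set (swap_at ws p) \<subseteq> set ws"
proof
  fix x assume "Suc p < length ws" "x \<in> set (swap_at ws p)"
  then obtain i where "i < length ws" "swap_at ws p ! i = x" by (auto simp: in_set_conv_nth)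
  then show "x \<in> set ws" using \<open>Suc p < length ws\<close> by (auto simp: nth_swap_at split: if_splits)
qed

lemma legal_move_insert_vac_cases:
  assumes v: "Vac \<notin> set ws" and g: "g \<le> length ws" and lm: "legal_move (insert_vac ws g) y"
  shows "(g < length ws \<and> y = insert_vac ws (Suc g)) \<or> (0 < g \<and> y = insert_vac ws (g - 1)) \<or>
         (Suc g < length ws \<and> y = insert_vac (swap_at ws g) (g + 2)) \<or>
         (2 \<le> g \<and> y = insert_vac (swap_at ws (g - 2)) (g - 2))"
proof -
  let ?c = "insert_vac ws g"
  obtain i j where ij: "i < length ?c" "j < length ?c" "?c ! i = Vac"
    "j = i + 1 \<or> i = j + 1 \<or> j = i + 2 \<or> i = j + 2"
    and y: "y = ?c[i := ?c ! j, j := Vac]"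
    using lm unfolding legal_move_def by blast
  have L: "length ?c = Suc (length ws)" using g by simp
  have i: "i = g" using nth_insert_vac_eq_Vac[OF v g] ij(1,3) L by simp
  have ly: "length y = Suc (length ws)" using y L by simp
  from ij(4) show ?thesis
  proof (elim disjE)
    assume j: "j = i + 1"
    then have "g < length ws" using ij(2) i L by simp
    moreover have "y = insert_vac ws (Suc g)"
      by (rule insert_vac_eqI) (use ly \<open>g < length ws\<close> in \<open>auto simp: y j i nth_insert_vac nth_list_update\<close>)
    ultimately show ?thesis by blast
  next
    assume j: "i = j + 1"
    have "y = insert_vac ws (g - 1)"
      by (rule insert_vac_eqI) (use ly g j i in \<open>auto simp: y nth_insert_vac nth_list_update\<close>)
    then show ?thesis using j i by simp
  next
    assume j: "j = i + 2"
    then have "Suc g < length ws" using ij(2) i L by simp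
    moreover have "y = insert_vac (swap_at ws g) (g + 2)"
      by (rule insert_vac_eqI)
        (use ly \<open>Suc g < length ws\<close> j i in \<open>auto simp: y nth_insert_vac nth_list_update swap_at_def\<close>)
    ultimately show ?thesis by blast
  next
    assume j: "i = j + 2"
    have "y = insert_vac (swap_at ws (g - 2)) (g - 2)"
      by (rule insert_vac_eqI) (use ly g j i in \<open>auto simp: y nth_insert_vac nth_list_update swap_at_def\<close>)
    then show ?thesis using j i by simp
  qed
qed

lemma legal_slide_right:
  "Vac \<notin> set ws \<Longrightarrow> g < length ws \<Longrightarrow> legal_move (insert_vac ws g) (insert_vac ws (Suc g))"
  unfolding legal_move_def
  by (intro exI[of _ g] exI[of _ "Suc g"])
    (auto simp: nth_insert_vac nth_not_Vac intro!: insert_vac_eqI[symmetric] simp: nth_list_update)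

lemma legal_slide_left:
  "Vac \<notin> set ws \<Longrightarrow> 0 < g \<Longrightarrow> g \<le> length ws \<Longrightarrow> legal_move (insert_vac ws g) (insert_vac ws (g - 1))"
  unfolding legal_move_def
  by (intro exI[of _ g] exI[of _ "g - 1"])
    (auto simp: nth_insert_vac nth_not_Vac intro!: insert_vac_eqI[symmetric] simp: nth_list_update)

lemma legal_jump_right:
  "Vac \<notin> set ws \<Longrightarrow> Suc g < length ws \<Longrightarrow>
   legal_move (insert_vac ws g) (insert_vac (swap_at ws g) (g + 2))"
  unfolding legal_move_def
  by (intro exI[of _ g] exI[of _ "g + 2"])
    (auto simp: nth_insert_vac nth_not_Vac intro!: insert_vac_eqI[symmetric] simp: nth_list_update swap_at_def)

lemma legal_jump_left:
  "Vac \<notin> set ws \<Longrightarrow> 2 \<le> g \<Longrightarrow> g \<le> length ws \<Longrightarrow>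
   legal_move (insert_vac ws g) (insert_vac (swap_at ws (g - 2)) (g - 2))"
  unfolding legal_move_def
  by (intro exI[of _ g] exI[of _ "g - 2"])
    (auto simp: nth_insert_vac nth_not_Vac intro!: insert_vac_eqI[symmetric] simp: nth_list_update swap_at_def)

definition whites :: "nat \<Rightarrow> cell list \<Rightarrow> nat" where
  "whites k ws = length (filter (\<lambda>x. x = Wht) (take k ws))"

definition blacks :: "nat \<Rightarrow> cell list \<Rightarrow> nat" where
  "blacks k ws = length (filter (\<lambda>x. x = Blk) (take k ws))"

lemma whites_0 [simp]: "whites 0 ws = 0"
  by (simp add: whites_def)

lemma whites_Suc: "whites (Suc k) ws = whites k ws + (if k < length ws \<and> ws ! k = Wht then 1 else 0)"
  by (cases "k < length ws") (auto simp: whites_def take_Suc_conv_app_nth)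

lemma blacks_Suc: "blacks (Suc k) ws = blacks k ws + (if k < length ws \<and> ws ! k = Blk then 1 else 0)"
  by (cases "k < length ws") (auto simp: blacks_def take_Suc_conv_app_nth)

lemma whites_mono: "k \<le> k' \<Longrightarrow> whites k ws \<le> whites k' ws"
  by (induction k' rule: dec_induct) (auto simp: whites_Suc)

lemma blacks_mono: "k \<le> k' \<Longrightarrow> blacks k ws \<le> blacks k' ws"
  by (induction k' rule: dec_induct) (auto simp: blacks_Suc)

lemma whites_le: "whites k ws \<le> k"
  by (induction k) (auto simp: whites_Suc)

lemma whites_Suc_le: "whites (Suc k) ws \<le> Suc (whites k ws)"
  by (simp add: whites_Suc)

lemma whites_add_blacks: "set ws \<subseteq> {Blk, Wht} \<Longrightarrow> k \<le> length ws \<Longrightarrow> whites k ws + blacks k ws = k"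
proof (induction k)
  case (Suc k)
  have "ws ! k \<in> set ws" using Suc.prems by (intro nth_mem) simp
  then have "ws ! k \<in> {Blk, Wht}" using Suc.prems by blast
  then show ?case using Suc by (cases "ws ! k") (auto simp: whites_Suc blacks_Suc)
qed (simp add: blacks_def)

lemma whites_swap_at_le: "Suc p < length ws \<Longrightarrow> k \<le> p \<Longrightarrow> whites k (swap_at ws p) = whites k ws"
  by (induction k) (auto simp: whites_Suc nth_swap_at)

lemma whites_swap_at_ge:
  assumes "Suc p < length ws" "p + 2 \<le> k"
  shows "whites k (swap_at ws p) = whites k ws"
  using assms(2)
proof (induction k rule: dec_induct)
  case base
  then show ?case using assms(1)
    by (simp add: numeral_2_eq_2 whites_Suc whites_swap_at_le nth_swap_at)
next
  case (step k)
  then show ?case using assms(1) by (auto simp: whites_Suc nth_swap_at)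
qed

lemma whites_swap_at: "Suc p < length ws \<Longrightarrow> k \<noteq> Suc p \<Longrightarrow> whites k (swap_at ws p) = whites k ws"
  by (cases "k \<le> p") (auto simp: whites_swap_at_le whites_swap_at_ge)

lemma whites_swap_at_Suc:
  "Suc p < length ws \<Longrightarrow> whites (Suc p) (swap_at ws p) = whites p ws + (if ws ! Suc p = Wht then 1 else 0)"
  by (simp add: whites_Suc whites_swap_at_le nth_swap_at)

lemma whites_replicate_BW: "whites k (replicate a Blk @ replicate b Wht) = min (k - a) b"
  by (simp add: whites_def take_append filter_replicate)

lemma whites_replicate_WB: "whites k (replicate a Wht @ replicate b Blk) = min k a"
  by (simp add: whites_def take_append filter_replicate)

text \<open>A configuration with vacancy at index \<open>g\<close> is \<open>insert_vac ws g\<close> for a \<open>word n m ws\<close>.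
  The pair \<open>(i, j)\<close> of the \<open>i\<close>-th white and the \<open>j\<close>-th black checker (counted from the left,
  from 0) is passed when that white stands left of that black.  Every jump over a checker of the
  other colour passes or unpasses exactly one pair, on the diagonal \<open>diag (i, j) = i - j\<close>
  given by the height of the vacancy, the number of whites minus the number of blacks left of it.\<close>

definition word :: "nat \<Rightarrow> nat \<Rightarrow> cell list \<Rightarrow> bool" where
  "word n m ws \<longleftrightarrow> length ws = n + m \<and> set ws \<subseteq> {Blk, Wht} \<and> whites (n + m) ws = m"

definition grid :: "nat \<Rightarrow> nat \<Rightarrow> (nat \<times> nat) set" where
  "grid n m = {0..<m} \<times> {0..<n}"

definition passed :: "nat \<Rightarrow> nat \<Rightarrow> cell list \<Rightarrow> (nat \<times> nat) set" where
  "passed n m ws = {q \<in> grid n m. fst q < whites (fst q + snd q + 1) ws}"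

definition unpassed :: "nat \<Rightarrow> nat \<Rightarrow> cell list \<Rightarrow> (nat \<times> nat) set" where
  "unpassed n m ws = grid n m - passed n m ws"

definition diag :: "nat \<times> nat \<Rightarrow> int" where
  "diag q = int (fst q) - int (snd q)"

definition height :: "cell list \<Rightarrow> nat \<Rightarrow> int" where
  "height ws g = 2 * int (whites g ws) - int g"

lemma word_Vac_notin: "word n m ws \<Longrightarrow> Vac \<notin> set ws"
  by (auto simp: word_def)

lemma word_nth: "word n m ws \<Longrightarrow> k < length ws \<Longrightarrow> ws ! k = Blk \<or> ws ! k = Wht"
proof -
  assume "word n m ws" "k < length ws"
  then have "ws ! k \<in> set ws" "set ws \<subseteq> {Blk, Wht}" by (auto simp: word_def)
  then show ?thesis by blast
qed

lemma word_blacks: "word n m ws \<Longrightarrow> blacks (n + m) ws = n"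
  using whites_add_blacks[of ws "n + m"] by (simp add: word_def)

lemma word_swap_at: "word n m ws \<Longrightarrow> Suc p < length ws \<Longrightarrow> word n m (swap_at ws p)"
  unfolding word_def using set_swap_at[of p ws] whites_swap_at[of p ws "n + m"] by auto

lemma height_bounds:
  assumes w: "word n m ws" and g: "g \<le> n + m"
  shows "- int n \<le> height ws g \<and> height ws g \<le> int m \<and> whites g ws \<le> m \<and> g - whites g ws \<le> n"
proof -
  have "whites g ws + blacks g ws = g" using whites_add_blacks[of ws g] w g by (simp add: word_def)
  moreover have "whites g ws \<le> m" using whites_mono[OF g, of ws] w by (simp add: word_def)
  moreover have "blacks g ws \<le> n" using blacks_mono[OF g, of ws] word_blacks[OF w] by simp
  ultimately show ?thesis by (auto simp: height_def)
qed

lemma mem_grid: "q \<in> grid n m \<longleftrightarrow> fst q < m \<and> snd q < n"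
  by (cases q) (auto simp: grid_def)

lemma finite_grid [simp]: "finite (grid n m)"
  by (simp add: grid_def)

lemma card_grid: "card (grid n m) = n * m"
  by (simp add: grid_def card_cartesian_product)

lemma passed_subset: "passed n m ws \<subseteq> grid n m"
  by (auto simp: passed_def)

lemma unpassed_subset: "unpassed n m ws \<subseteq> grid n m"
  by (auto simp: unpassed_def)

lemma finite_passed [simp]: "finite (passed n m ws)"
  by (rule finite_subset[OF passed_subset]) simp

lemma finite_unpassed [simp]: "finite (unpassed n m ws)"
  by (rule finite_subset[OF unpassed_subset]) simp

lemma diag_fst_eq: "diag q = diag q' \<Longrightarrow> fst q = fst q' \<Longrightarrow> q = q'"
  by (cases q, cases q') (auto simp: diag_def)

lemma diag_grid: "q \<in> grid n m \<Longrightarrow> - int n < diag q \<and> diag q < int m"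
  by (cases q) (auto simp: mem_grid diag_def)

lemma diag_image_grid:
  assumes "1 \<le> n" "1 \<le> m"
  shows "diag ` grid n m = {- int n<..<int m}"
proof
  show "diag ` grid n m \<subseteq> {- int n<..<int m}" using diag_grid by fastforce
  show "{- int n<..<int m} \<subseteq> diag ` grid n m"
  proof
    fix z assume z: "z \<in> {- int n<..<int m}"
    show "z \<in> diag ` grid n m"
    proof (cases "0 \<le> z")
      case True
      then have "(nat z, 0) \<in> grid n m" "diag (nat z, 0) = z"
        using z assms by (auto simp: mem_grid diag_def)
      then show ?thesis by force
    next
      case False
      then have "(0, nat (- z)) \<in> grid n m" "diag (0, nat (- z)) = z"
        using z assms by (auto simp: mem_grid diag_def)
      then show ?thesis by force
    qed
  qed
qed

lemma diag_grid_exists: "1 \<le> n \<Longrightarrow> 1 \<le> m \<Longrightarrow> - int n < z \<Longrightarrow> z < int m \<Longrightarrow> \<exists>s\<in>grid n m. diag s = z"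
  using diag_image_grid[of n m] by (metis greaterThanLessThan_iff imageE)

lemma passed_dec_white: "(i, j) \<in> passed n m ws \<Longrightarrow> 0 < i \<Longrightarrow> (i - 1, j) \<in> passed n m ws"
proof -
  assume a: "(i, j) \<in> passed n m ws" "0 < i"
  have "whites (Suc (i + j)) ws \<le> Suc (whites (i + j) ws)" by (rule whites_Suc_le)
  then show ?thesis using a by (auto simp: passed_def mem_grid)
qed

lemma passed_inc_black: "(i, j) \<in> passed n m ws \<Longrightarrow> Suc j < n \<Longrightarrow> (i, Suc j) \<in> passed n m ws"
proof -
  assume a: "(i, j) \<in> passed n m ws" "Suc j < n"
  have "whites (i + j + 1) ws \<le> whites (i + Suc j + 1) ws" by (rule whites_mono) simp
  then show ?thesis using a by (auto simp: passed_def mem_grid)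
qed

lemma passed_swap_BW:
  assumes w: "word n m ws" and p: "Suc p < length ws" and b: "ws ! p = Blk" and ww: "ws ! Suc p = Wht"
  defines "q \<equiv> (whites p ws, p - whites p ws)"
  shows "q \<in> grid n m" "q \<notin> passed n m ws" "passed n m (swap_at ws p) = insert q (passed n m ws)"
proof -
  have set: "set ws \<subseteq> {Blk, Wht}" and len: "length ws = n + m" using w by (auto simp: word_def)
  have c1: "whites (Suc p) ws = whites p ws" using b by (simp add: whites_Suc)
  have c2: "whites (Suc (Suc p)) ws = Suc (whites p ws)" using b ww p by (simp add: whites_Suc)
  have "whites (Suc (Suc p)) ws \<le> whites (n + m) ws" using p len by (intro whites_mono) simp
  then have am: "whites p ws < m" using c2 w by (simp add: word_def)
  have cbp: "whites p ws + blacks p ws = p" using whites_add_blacks[OF set] p by simp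
  have cb1: "blacks (Suc p) ws = Suc (blacks p ws)" using b p by (simp add: blacks_Suc)
  have "blacks (Suc p) ws \<le> blacks (n + m) ws" using p len by (intro blacks_mono) simp
  then have bn: "p - whites p ws < n" using cb1 cbp word_blacks[OF w] by simp
  show q: "q \<in> grid n m" using am bn by (simp add: q_def mem_grid)
  have le: "whites p ws \<le> p" by (rule whites_le)
  show "q \<notin> passed n m ws" using c1 le by (simp add: q_def passed_def)
  show "passed n m (swap_at ws p) = insert q (passed n m ws)"
  proof (rule set_eqI)
    fix x :: "nat \<times> nat"
    obtain i j where x: "x = (i, j)" by fastforce
    show "x \<in> passed n m (swap_at ws p) \<longleftrightarrow> x \<in> insert q (passed n m ws)"
    proof (cases "i + j = p")
      case True
      have "whites (Suc p) (swap_at ws p) = Suc (whites p ws)"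
        using whites_swap_at_Suc[OF p] ww by simp
      then show ?thesis using True c1 q le by (auto simp: x passed_def q_def mem_grid)
    next
      case False
      then have "whites (i + j + 1) (swap_at ws p) = whites (i + j + 1) ws"
        using whites_swap_at[OF p] by simp
      then show ?thesis using False le by (auto simp: x passed_def q_def)
    qed
  qed
qed

lemma swap_BW_facts:
  assumes w: "word n m ws" and p: "Suc p < length ws" and b: "ws ! p = Blk" and ww: "ws ! Suc p = Wht"
    and gg: "(g = p \<and> g' = p + 2) \<or> (g = p + 2 \<and> g' = p)"
  defines "q \<equiv> (whites p ws, p - whites p ws)"
  shows "q \<in> grid n m" "q \<notin> passed n m ws" "passed n m (swap_at ws p) = insert q (passed n m ws)"
    "diag q = height ws g" "height (swap_at ws p) g' = height ws g" "word n m (swap_at ws p)" "g' \<le> n + m"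
    "g = p \<Longrightarrow> whites g ws = fst q \<and> whites g' (swap_at ws p) = Suc (fst q)"
    "g = p + 2 \<Longrightarrow> whites g ws = Suc (fst q) \<and> whites g' (swap_at ws p) = fst q"
proof -
  let ?v = "swap_at ws p"
  note f = passed_swap_BW[OF w p b ww, folded q_def]
  show "q \<in> grid n m" "q \<notin> passed n m ws" "passed n m ?v = insert q (passed n m ws)" using f by auto
  have le: "whites p ws \<le> p" by (rule whites_le)
  have c2: "whites (p + 2) ws = Suc (whites p ws)"
    using b ww p by (simp add: numeral_2_eq_2 whites_Suc)
  have c2v: "whites (p + 2) ?v = Suc (whites p ws)"
    using c2 whites_swap_at[OF p, of "p + 2"] by simp
  have c0v: "whites p ?v = whites p ws" using whites_swap_at_le[OF p] by simp
  have "diag q = 2 * int (whites p ws) - int p" using le by (simp add: q_def diag_def)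
  then show "diag q = height ws g" "height ?v g' = height ws g"
    using gg c2 c2v c0v by (auto simp: height_def)
  show "word n m ?v" by (rule word_swap_at[OF w p])
  show "g' \<le> n + m" using gg p w by (auto simp: word_def)
  show "g = p \<Longrightarrow> whites g ws = fst q \<and> whites g' ?v = Suc (fst q)"
    using gg c2v by (auto simp: q_def)
  show "g = p + 2 \<Longrightarrow> whites g ws = Suc (fst q) \<and> whites g' ?v = fst q"
    using gg c2 c0v by (auto simp: q_def)
qed

lemma swap_WB_facts:
  assumes w: "word n m ws" and p: "Suc p < length ws" and b: "ws ! p = Wht" and ww: "ws ! Suc p = Blk"
    and gg: "(g = p \<and> g' = p + 2) \<or> (g = p + 2 \<and> g' = p)"
  obtains q where "q \<in> passed n m ws" "passed n m (swap_at ws p) = passed n m ws - {q}"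
    "height (swap_at ws p) g' = height ws g" "word n m (swap_at ws p)" "g' \<le> n + m"
proof -
  let ?v = "swap_at ws p"
  have p': "Suc p < length ?v" using p by simp
  have b': "?v ! p = Blk" "?v ! Suc p = Wht" using b ww p by (auto simp: nth_swap_at)
  have gg': "(g' = p \<and> g = p + 2) \<or> (g' = p + 2 \<and> g = p)" using gg by auto
  note f = swap_BW_facts[OF word_swap_at[OF w p] p' b' gg', unfolded swap_at_swap_at[OF p]]
  let ?q = "(whites p ?v, p - whites p ?v)"
  have q: "?q \<in> passed n m ws" "passed n m ?v = passed n m ws - {?q}" using f(2,3) by auto
  have g': "g' \<le> n + m" using gg p w by (auto simp: word_def)
  show ?thesis by (rule that[OF q f(5)[symmetric] word_swap_at[OF w p] g'])
qed

text \<open>A potential for processing the pairs of \<open>R \<subseteq> S\<close> with the vacancy at height \<open>c\<close>,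
  \<open>i0\<close> whites left of it, and final height \<open>e\<close>.  Each pair of \<open>R\<close> costs a jump, performed
  at the height of its diagonal, so the height has to visit every diagonal of \<open>R\<close> and end
  at \<open>e\<close>; as it changes by at most one per move this costs \<open>card (diags R e c) - 1\<close> further
  moves.  The defect adds one move whenever the pairs of \<open>R\<close> on the current diagonal cannot be
  processed right away: they do not form a run of consecutive pairs starting at the vacancy
  (\<open>run_from\<close>, \<open>run_below\<close>), or one of them still waits for a pair in \<open>D\<close> of it.\<close>

definition run_from :: "(nat \<times> nat) set \<Rightarrow> (nat \<times> nat) set \<Rightarrow> int \<Rightarrow> nat \<Rightarrow> bool" where
  "run_from S R c i0 \<longleftrightarrow> (\<forall>q\<in>R. diag q = c \<longrightarrow> i0 \<le> fst q \<and>
      (\<forall>q'\<in>S. diag q' = c \<longrightarrow> i0 \<le> fst q' \<longrightarrow> fst q' \<le> fst q \<longrightarrow> q' \<in> R))"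

definition run_below :: "(nat \<times> nat) set \<Rightarrow> (nat \<times> nat) set \<Rightarrow> int \<Rightarrow> nat \<Rightarrow> bool" where
  "run_below S R c i0 \<longleftrightarrow> (\<forall>q\<in>R. diag q = c \<longrightarrow> fst q < i0 \<and>
      (\<forall>q'\<in>S. diag q' = c \<longrightarrow> fst q \<le> fst q' \<longrightarrow> fst q' < i0 \<longrightarrow> q' \<in> R))"

definition defect :: "(nat \<times> nat) set \<Rightarrow> (nat \<times> nat) set \<Rightarrow> int \<Rightarrow> int \<Rightarrow> nat \<Rightarrow>
    ((nat \<times> nat) \<Rightarrow> (nat \<times> nat) set) \<Rightarrow> bool" where
  "defect S R e c i0 D \<longleftrightarrow> (c = e \<and> R \<noteq> {}) \<or>
     ((\<exists>q\<in>R. diag q = c) \<and> \<not> run_from S R c i0 \<and> \<not> run_below S R c i0) \<or>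
     (\<exists>q\<in>R. diag q = c \<and> (\<exists>q'\<in>D q. q' \<in> R))"

definition diags :: "(nat \<times> nat) set \<Rightarrow> int \<Rightarrow> int \<Rightarrow> int set" where
  "diags R e c = {e, c} \<union> diag ` R"

definition potential :: "(nat \<times> nat) set \<Rightarrow> (nat \<times> nat) set \<Rightarrow> int \<Rightarrow> int \<Rightarrow> nat \<Rightarrow>
    ((nat \<times> nat) \<Rightarrow> (nat \<times> nat) set) \<Rightarrow> int" where
  "potential S R e c i0 D =
     int (card R) + int (card (diags R e c)) - 1 + (if defect S R e c i0 D then 1 else 0)"

lemma finite_diags [simp]: "finite R \<Longrightarrow> finite (diags R e c)"
  by (simp add: diags_def)

lemma defect_height_in_diags: "defect S R e c i0 D \<Longrightarrow> c \<in> insert e (diag ` R)"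
  by (auto simp: defect_def)

lemma potential_height_change:
  assumes "finite R"
  shows "potential S R e c i0 D \<le> potential S R e c' i0' D + 1"
proof -
  have f: "finite (diags R e c')" using assms by simp
  have "card (diags R e c) \<le> card (insert c (diags R e c'))"
    using f by (intro card_mono) (auto simp: diags_def)
  also have "\<dots> \<le> Suc (card (diags R e c'))" by (simp add: card_insert_if f)
  finally have A: "card (diags R e c) \<le> Suc (card (diags R e c'))" .
  have B: "defect S R e c i0 D \<Longrightarrow> card (diags R e c) \<le> card (diags R e c')"
    using f defect_height_in_diags[of S R e c i0 D] by (intro card_mono) (auto simp: diags_def)
  show ?thesis using A B by (auto simp: potential_def)
qed

lemma potential_insert_mono:
  assumes "finite R" "q \<notin> R"
  shows "potential S R e c i0 D \<le> potential S (insert q R) e c i0' D"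
proof -
  have "card (diags R e c) \<le> card (diags (insert q R) e c)"
    using assms by (intro card_mono) (auto simp: diags_def)
  moreover have "card (insert q R) = Suc (card R)" using assms by simp
  ultimately show ?thesis by (auto simp: potential_def)
qed

lemma run_from_single:
  "(\<forall>q1\<in>R. diag q1 = c \<longrightarrow> q1 = q) \<Longrightarrow> diag q = c \<Longrightarrow> fst q = i0 \<Longrightarrow> q \<in> R \<Longrightarrow>
   run_from S R c i0"
  unfolding run_from_def
proof (intro ballI impI conjI)
  fix q2 assume h: "\<forall>q1\<in>R. diag q1 = c \<longrightarrow> q1 = q" "diag q = c" "fst q = i0" "q \<in> R"
    and q2: "q2 \<in> R" "diag q2 = c"
  then have "q2 = q" using q2 by blast
  then show "i0 \<le> fst q2" using h(3) by simp
  fix q' assume "q' \<in> S" "diag q' = c" "i0 \<le> fst q'" "fst q' \<le> fst q2"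
  then have "fst q' = fst q" using h(3) \<open>q2 = q\<close> by simp
  then have "q' = q" using diag_fst_eq[of q' q] \<open>diag q' = c\<close> h(2) by simp
  then show "q' \<in> R" using h(4) by simp
qed

lemma run_below_single:
  "(\<forall>q1\<in>R. diag q1 = c \<longrightarrow> q1 = q) \<Longrightarrow> diag q = c \<Longrightarrow> Suc (fst q) = i0 \<Longrightarrow> q \<in> R \<Longrightarrow>
   run_below S R c i0"
  unfolding run_below_def
proof (intro ballI impI conjI)
  fix q2 assume h: "\<forall>q1\<in>R. diag q1 = c \<longrightarrow> q1 = q" "diag q = c" "Suc (fst q) = i0" "q \<in> R"
    and q2: "q2 \<in> R" "diag q2 = c"
  then have "q2 = q" using q2 by blast
  then show "fst q2 < i0" using h(3) by simp
  fix q' assume "q' \<in> S" "diag q' = c" "fst q2 \<le> fst q'" "fst q' < i0"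
  then have "fst q' = fst q" using h(3) \<open>q2 = q\<close> by simp
  then have "q' = q" using diag_fst_eq[of q' q] \<open>diag q' = c\<close> h(2) by simp
  then show "q' \<in> R" using h(4) by simp
qed

lemma run_remove_first:
  assumes RS: "R \<subseteq> S" and q: "q \<in> R" "diag q = c" and pos: "fst q = i0" "i0' = Suc i0"
    and a: "run_from S (R - {q}) c i0' \<or> run_below S (R - {q}) c i0'"
  shows "run_from S R c i0 \<or> run_below S R c i0"
proof (cases "\<exists>q1\<in>R - {q}. diag q1 = c")
  case False
  then have "\<forall>q1\<in>R. diag q1 = c \<longrightarrow> q1 = q" by blast
  then have "run_from S R c i0" using q pos run_from_single by blast
  then show ?thesis ..
next
  case True
  then obtain q1 where q1: "q1 \<in> R" "q1 \<noteq> q" "diag q1 = c" by blast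
  have ne: "fst q1 \<noteq> i0" using q1 q pos diag_fst_eq[of q1 q] by auto
  have "\<not> run_below S (R - {q}) c i0'"
  proof
    assume L: "run_below S (R - {q}) c i0'"
    have q1': "q1 \<in> R - {q}" using q1 by blast
    then have "fst q1 < i0'" using L q1(3) unfolding run_below_def by blast
    then have le: "fst q1 \<le> fst q" using pos ne by simp
    have "fst q < i0'" using pos by simp
    then have "q \<in> R - {q}" using L q1' q1(3) le q(2) RS q(1) unfolding run_below_def by blast
    then show False by simp
  qed
  then have R: "run_from S (R - {q}) c i0'" using a by blast
  have "run_from S R c i0"
    unfolding run_from_def
  proof (intro ballI impI conjI)
    fix q2 assume q2: "q2 \<in> R" "diag q2 = c"
    show "i0 \<le> fst q2"
    proof (cases "q2 = q")
      case False
      then have "q2 \<in> R - {q}" using q2 by blast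
      then have "i0' \<le> fst q2" using R q2(2) unfolding run_from_def by blast
      then show ?thesis using pos by simp
    qed (use pos in simp)
    fix q' assume q': "q' \<in> S" "diag q' = c" "i0 \<le> fst q'" "fst q' \<le> fst q2"
    show "q' \<in> R"
    proof (cases "fst q' = i0")
      case True then show ?thesis using diag_fst_eq[of q' q] q' q pos by auto
    next
      case False
      then have "q2 \<noteq> q" using q' pos by auto
      then have "q2 \<in> R - {q}" using q2 by blast
      moreover have "i0' \<le> fst q'" using False q' pos by simp
      ultimately have "q' \<in> R - {q}" using R q2(2) q' unfolding run_from_def by blast
      then show ?thesis by blast
    qed
  qed
  then show ?thesis ..
qed

lemma run_remove_last:
  assumes RS: "R \<subseteq> S" and q: "q \<in> R" "diag q = c" and pos: "Suc (fst q) = i0" "Suc i0' = i0"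
    and a: "run_from S (R - {q}) c i0' \<or> run_below S (R - {q}) c i0'"
  shows "run_from S R c i0 \<or> run_below S R c i0"
proof (cases "\<exists>q1\<in>R - {q}. diag q1 = c")
  case False
  then have "\<forall>q1\<in>R. diag q1 = c \<longrightarrow> q1 = q" by blast
  then have "run_below S R c i0" using q pos run_below_single by blast
  then show ?thesis ..
next
  case True
  then obtain q1 where q1: "q1 \<in> R" "q1 \<noteq> q" "diag q1 = c" by blast
  have ne: "fst q1 \<noteq> fst q" using q1 q diag_fst_eq[of q1 q] by auto
  have "\<not> run_from S (R - {q}) c i0'"
  proof
    assume Rr: "run_from S (R - {q}) c i0'"
    have q1': "q1 \<in> R - {q}" using q1 by blast
    then have "i0' \<le> fst q1" using Rr q1(3) unfolding run_from_def by blast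
    then have le: "fst q \<le> fst q1" using pos ne by simp
    have "i0' \<le> fst q" using pos by simp
    then have "q \<in> R - {q}" using Rr q1' q1(3) le q(2) RS q(1) unfolding run_from_def by blast
    then show False by simp
  qed
  then have L: "run_below S (R - {q}) c i0'" using a by blast
  have "run_below S R c i0"
    unfolding run_below_def
  proof (intro ballI impI conjI)
    fix q2 assume q2: "q2 \<in> R" "diag q2 = c"
    show "fst q2 < i0"
    proof (cases "q2 = q")
      case False
      then have "q2 \<in> R - {q}" using q2 by blast
      then have "fst q2 < i0'" using L q2(2) unfolding run_below_def by blast
      then show ?thesis using pos by simp
    qed (use pos in simp)
    fix q' assume q': "q' \<in> S" "diag q' = c" "fst q2 \<le> fst q'" "fst q' < i0"
    show "q' \<in> R"
    proof (cases "fst q' = fst q")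
      case True then show ?thesis using diag_fst_eq[of q' q] q' q by auto
    next
      case False
      then have lt: "fst q' < i0'" using q' pos by auto
      have "q2 \<noteq> q" using q' pos False by auto
      then have "q2 \<in> R - {q}" using q2 by blast
      then have "q' \<in> R - {q}" using L q2(2) q' lt unfolding run_below_def by blast
      then show ?thesis by blast
    qed
  qed
  then show ?thesis ..
qed

lemma potential_remove:
  assumes fin: "finite R" and RS: "R \<subseteq> S" and q: "q \<in> R" "diag q = c" and ce: "c \<noteq> e"
    and mv: "(fst q = i0 \<and> i0' = Suc i0) \<or> (Suc (fst q) = i0 \<and> Suc i0' = i0)"
    and Dq: "\<forall>q'\<in>D q. q' \<notin> R - {q}" and Dl: "\<And>q1 q'. q' \<in> D q1 \<Longrightarrow> diag q' \<noteq> diag q1"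
  shows "potential S R e c i0 D \<le> potential S (R - {q}) e c i0' D + 1"
proof -
  have diags: "diags R e c = diags (R - {q}) e c" using q by (auto simp: diags_def)
  have card: "card R = Suc (card (R - {q}))" using fin q(1) card_Suc_Diff1 by metis
  have run_keep: "run_from S (R - {q}) c i0' \<or> run_below S (R - {q}) c i0' \<Longrightarrow>
      run_from S R c i0 \<or> run_below S R c i0"
    using mv run_remove_first[OF RS q] run_remove_last[OF RS q] by blast
  have defect_remove: "defect S R e c i0 D \<Longrightarrow> defect S (R - {q}) e c i0' D"
  proof -
    assume B: "defect S R e c i0 D"
    show ?thesis
    proof (cases "\<exists>q1\<in>R. diag q1 = c \<and> (\<exists>q'\<in>D q1. q' \<in> R)")
      case True
      then obtain q1 q' where w: "q1 \<in> R" "diag q1 = c" "q' \<in> D q1" "q' \<in> R" by auto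
      have "q' \<noteq> q" using Dl[OF w(3)] w(2) q(2) by auto
      have "q1 \<noteq> q"
      proof
        assume "q1 = q"
        then have "q' \<in> R - {q}" using w \<open>q' \<noteq> q\<close> by auto
        then show False using Dq w(3) \<open>q1 = q\<close> by auto
      qed
      then show ?thesis using w \<open>q' \<noteq> q\<close> by (auto simp: defect_def)
    next
      case False
      then have nb: "(\<exists>q\<in>R. diag q = c) \<and> \<not> run_from S R c i0 \<and> \<not> run_below S R c i0"
        using B ce by (auto simp: defect_def)
      have "\<not> run_from S (R - {q}) c i0' \<and> \<not> run_below S (R - {q}) c i0'"
        using run_keep nb by blast
      moreover have "\<exists>q\<in>R - {q}. diag q = c"
      proof (rule ccontr)
        assume "\<not> (\<exists>q\<in>R - {q}. diag q = c)"
        then have "run_from S (R - {q}) c i0'" by (auto simp: run_from_def)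
        then show False using \<open>\<not> run_from S (R - {q}) c i0' \<and> \<not> run_below S (R - {q}) c i0'\<close>
          by simp
      qed
      ultimately show ?thesis by (auto simp: defect_def)
    qed
  qed
  show ?thesis using diags card defect_remove by (auto simp: potential_def)
qed

text \<open>The pairs that are passed before, respectively after, a given pair in every word.\<close>

definition preds :: "nat \<times> nat \<Rightarrow> (nat \<times> nat) set" where
  "preds q = {q'. (Suc (fst q') = fst q \<and> snd q' = snd q) \<or> (fst q' = fst q \<and> snd q' = Suc (snd q))}"

definition succs :: "nat \<times> nat \<Rightarrow> (nat \<times> nat) set" where
  "succs q = {q'. (fst q' = Suc (fst q) \<and> snd q' = snd q) \<or> (fst q' = fst q \<and> Suc (snd q') = snd q)}"

lemma preds_diag: "q' \<in> preds q1 \<Longrightarrow> diag q' \<noteq> diag q1"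
  by (cases q', cases q1) (auto simp: preds_def diag_def)

lemma succs_diag: "q' \<in> succs q1 \<Longrightarrow> diag q' \<noteq> diag q1"
  by (cases q', cases q1) (auto simp: succs_def diag_def)

lemma preds_passed: "q \<in> passed n m ws \<Longrightarrow> \<forall>q'\<in>preds q. q' \<notin> unpassed n m ws"
proof
  fix q' assume a: "q \<in> passed n m ws" "q' \<in> preds q"
  obtain i j where q: "q = (i, j)" by fastforce
  show "q' \<notin> unpassed n m ws"
  proof
    assume u: "q' \<in> unpassed n m ws"
    then have s: "q' \<in> grid n m" "q' \<notin> passed n m ws" by (auto simp: unpassed_def)
    from a(2) q have "q' = (i - 1, j) \<and> 0 < i \<or> q' = (i, Suc j)"
      by (cases q') (auto simp: preds_def)
    then show False
    proof
      assume "q' = (i - 1, j) \<and> 0 < i"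
      then show False using passed_dec_white[of i j n m ws] a(1) q s by auto
    next
      assume "q' = (i, Suc j)"
      then show False using passed_inc_black[of i j n m ws] a(1) q s by (auto simp: mem_grid)
    qed
  qed
qed

lemma succs_unpassed:
  "q \<in> grid n m \<Longrightarrow> q \<notin> passed n m ws \<Longrightarrow> \<forall>q'\<in>succs q. q' \<notin> passed n m ws"
proof
  fix q' assume a: "q \<in> grid n m" "q \<notin> passed n m ws" "q' \<in> succs q"
  obtain i j where q: "q = (i, j)" by fastforce
  show "q' \<notin> passed n m ws"
  proof
    assume f: "q' \<in> passed n m ws"
    from a(3) q have "q' = (Suc i, j) \<or> q' = (i, j - 1) \<and> 0 < j"
      by (cases q') (auto simp: succs_def)
    then show False
    proof
      assume "q' = (Suc i, j)"
      then show False using passed_dec_white[of "Suc i" j n m ws] f a q by auto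
    next
      assume h: "q' = (i, j - 1) \<and> 0 < j"
      then have "(i, Suc (j - 1)) \<in> passed n m ws" using passed_inc_black[of i "j - 1" n m ws] f a q
        by (auto simp: mem_grid)
      then show False using h a q by simp
    qed
  qed
qed

lemma preds_prev_diag:
  "s \<in> grid n m \<Longrightarrow> 1 - int n < diag s \<Longrightarrow> \<exists>p'\<in>preds s. p' \<in> grid n m \<and> diag p' = diag s - 1"
proof -
  assume a: "s \<in> grid n m" "1 - int n < diag s"
  obtain i j where s: "s = (i, j)" by fastforce
  show ?thesis
  proof (cases "0 < i")
    case True
    then show ?thesis
      using a s by (intro bexI[of _ "(i - 1, j)"]) (auto simp: preds_def mem_grid diag_def)
  next
    case False
    then show ?thesis
      using a s by (intro bexI[of _ "(i, Suc j)"]) (auto simp: preds_def mem_grid diag_def)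
  qed
qed

lemma succs_next_diag:
  "s \<in> grid n m \<Longrightarrow> diag s < int m - 1 \<Longrightarrow> \<exists>p'\<in>succs s. p' \<in> grid n m \<and> diag p' = diag s + 1"
proof -
  assume a: "s \<in> grid n m" "diag s < int m - 1"
  obtain i j where s: "s = (i, j)" by fastforce
  show ?thesis
  proof (cases "Suc i < m")
    case True
    then show ?thesis
      using a s by (intro bexI[of _ "(Suc i, j)"]) (auto simp: succs_def mem_grid diag_def)
  next
    case False
    then have "0 < j" using a s by (auto simp: mem_grid diag_def)
    then show ?thesis
      using a s by (intro bexI[of _ "(i, j - 1)"]) (auto simp: succs_def mem_grid diag_def)
  qed
qed

text \<open>\<open>phi_w\<close> is a lower bound for the number of moves still needed to reach the final
  configuration, \<open>psi_w\<close> one for the number of moves needed to come from the initial one.\<close>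

definition phi_w :: "nat \<Rightarrow> nat \<Rightarrow> cell list \<Rightarrow> nat \<Rightarrow> int" where
  "phi_w n m ws g = potential (grid n m) (unpassed n m ws) (int m) (height ws g) (whites g ws) preds"

definition psi_w :: "nat \<Rightarrow> nat \<Rightarrow> cell list \<Rightarrow> nat \<Rightarrow> int" where
  "psi_w n m ws g = potential (grid n m) (passed n m ws) (- int n) (height ws g) (whites g ws) succs"

lemma swap_BW_lipschitz:
  assumes w: "word n m ws" and p: "Suc p < length ws" and b: "ws ! p = Blk" and ww: "ws ! Suc p = Wht"
    and gg: "(g = p \<and> g' = p + 2) \<or> (g = p + 2 \<and> g' = p)"
  shows "\<bar>phi_w n m ws g - phi_w n m (swap_at ws p) g'\<bar> \<le> 1 \<and>
         \<bar>psi_w n m ws g - psi_w n m (swap_at ws p) g'\<bar> \<le> 1"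
proof -
  let ?v = "swap_at ws p"
  define q where "q = (whites p ws, p - whites p ws)"
  note f = swap_BW_facts[OF w p b ww gg, folded q_def]
  have h1: "height ws g = diag q" "height ?v g' = diag q" using f(4,5) by simp_all
  have qU: "q \<in> unpassed n m ws" using f by (simp add: unpassed_def)
  have UfV: "unpassed n m ?v = unpassed n m ws - {q}" using f by (auto simp: unpassed_def)
  have FlV: "passed n m ?v = insert q (passed n m ws)" using f by simp
  have qFv: "q \<in> passed n m ?v" using FlV by simp
  have lm: "diag q \<noteq> int m" "diag q \<noteq> - int n" using diag_grid[OF f(1)] by auto
  have mv1: "(fst q = whites g ws \<and> whites g' ?v = Suc (whites g ws)) \<or>
      (Suc (fst q) = whites g ws \<and> Suc (whites g' ?v) = whites g ws)"
    using gg f(8,9) by auto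
  have mv2: "(fst q = whites g' ?v \<and> whites g ws = Suc (whites g' ?v)) \<or>
      (Suc (fst q) = whites g' ?v \<and> Suc (whites g ws) = whites g' ?v)"
    using gg f(8,9) by auto
  have A1: "phi_w n m ws g \<le> phi_w n m ?v g' + 1"
    unfolding phi_w_def h1 UfV
    by (rule potential_remove[OF finite_unpassed unpassed_subset qU refl lm(1) mv1 _ preds_diag])
       (use preds_passed[OF qFv] UfV in auto)
  have A2: "phi_w n m ?v g' \<le> phi_w n m ws g + 1"
  proof -
    have "phi_w n m ?v g' \<le>
        potential (grid n m) (insert q (unpassed n m ?v)) (int m) (diag q) (whites g ws) preds"
      unfolding phi_w_def h1 by (rule potential_insert_mono) (auto simp: UfV)
    also have "insert q (unpassed n m ?v) = unpassed n m ws" using UfV qU by auto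
    finally show ?thesis unfolding phi_w_def h1 by simp
  qed
  have B1: "psi_w n m ws g \<le> psi_w n m ?v g' + 1"
  proof -
    have "psi_w n m ws g \<le>
        potential (grid n m) (insert q (passed n m ws)) (- int n) (diag q) (whites g' ?v) succs"
      unfolding psi_w_def h1 by (rule potential_insert_mono) (use f in auto)
    then show ?thesis unfolding psi_w_def h1 FlV by simp
  qed
  have B2: "psi_w n m ?v g' \<le> psi_w n m ws g + 1"
  proof -
    have e: "passed n m ?v - {q} = passed n m ws" using FlV f(2) by auto
    have "psi_w n m ?v g' \<le>
        potential (grid n m) (passed n m ?v - {q}) (- int n) (diag q) (whites g ws) succs + 1"
      unfolding psi_w_def h1
      by (rule potential_remove[OF finite_passed passed_subset qFv refl lm(2) mv2 _ succs_diag])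
         (use succs_unpassed[OF f(1) f(2)] e in auto)
    then show ?thesis unfolding psi_w_def h1 e by simp
  qed
  show ?thesis using A1 A2 B1 B2 by auto
qed

lemma gap_lipschitz:
  "\<bar>phi_w n m ws g - phi_w n m ws g'\<bar> \<le> 1 \<and> \<bar>psi_w n m ws g - psi_w n m ws g'\<bar> \<le> 1"
  unfolding phi_w_def psi_w_def
  using potential_height_change[OF finite_unpassed, of "grid n m" n m ws "int m" "height ws g" "whites g ws"
          preds "height ws g'" "whites g' ws"]
    potential_height_change[OF finite_unpassed, of "grid n m" n m ws "int m" "height ws g'" "whites g' ws"
          preds "height ws g" "whites g ws"]
    potential_height_change[OF finite_passed, of "grid n m" n m ws "- int n" "height ws g" "whites g ws"
          succs "height ws g'" "whites g' ws"]
    potential_height_change[OF finite_passed, of "grid n m" n m ws "- int n" "height ws g'" "whites g' ws"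
          succs "height ws g" "whites g ws"]
  by linarith

lemma jump_lipschitz:
  assumes w: "word n m ws" and p: "Suc p < length ws"
    and gg: "(g = p \<and> g' = p + 2) \<or> (g = p + 2 \<and> g' = p)"
  shows "\<bar>phi_w n m ws g - phi_w n m (swap_at ws p) g'\<bar> \<le> 1 \<and>
         \<bar>psi_w n m ws g - psi_w n m (swap_at ws p) g'\<bar> \<le> 1"
proof -
  consider "ws ! p = ws ! Suc p" | "ws ! p = Blk" "ws ! Suc p = Wht" | "ws ! p = Wht" "ws ! Suc p = Blk"
    using word_nth[OF w, of p] word_nth[OF w p] p by force
  then show ?thesis
  proof cases
    case 1
    then show ?thesis using swap_at_same[OF p] gap_lipschitz by simp
  next
    case 2
    then show ?thesis using swap_BW_lipschitz[OF w p _ _ gg] by simp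
  next
    case 3
    let ?v = "swap_at ws p"
    have b': "?v ! p = Blk" "?v ! Suc p = Wht" using 3 p by (auto simp: nth_swap_at)
    have gg': "(g' = p \<and> g = p + 2) \<or> (g' = p + 2 \<and> g = p)" using gg by auto
    have "\<bar>phi_w n m ?v g' - phi_w n m (swap_at ?v p) g\<bar> \<le> 1 \<and>
          \<bar>psi_w n m ?v g' - psi_w n m (swap_at ?v p) g\<bar> \<le> 1"
      using swap_BW_lipschitz[OF word_swap_at[OF w p] _ b' gg'] p by simp
    then show ?thesis using swap_at_swap_at[OF p] by (simp add: abs_minus_commute)
  qed
qed

text \<open>\<open>phi\<close> and \<open>psi\<close> are junk on configurations that are not \<open>valid_config\<close>.\<close>

definition decode :: "config \<Rightarrow> cell list \<times> nat" where
  "decode x = (filter (\<lambda>c. c \<noteq> Vac) x, length (takeWhile (\<lambda>c. c \<noteq> Vac) x))"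

definition phi :: "nat \<Rightarrow> nat \<Rightarrow> config \<Rightarrow> int" where
  "phi n m x = phi_w n m (fst (decode x)) (snd (decode x))"

definition psi :: "nat \<Rightarrow> nat \<Rightarrow> config \<Rightarrow> int" where
  "psi n m x = psi_w n m (fst (decode x)) (snd (decode x))"

definition valid_config :: "nat \<Rightarrow> nat \<Rightarrow> config \<Rightarrow> bool" where
  "valid_config n m x \<longleftrightarrow> (\<exists>ws g. x = insert_vac ws g \<and> word n m ws \<and> g \<le> n + m)"

lemma decode_insert_vac:
  assumes v: "Vac \<notin> set ws" and g: "g \<le> length ws"
  shows "decode (insert_vac ws g) = (ws, g)"
proof -
  have "\<forall>x\<in>set (take g ws). x \<noteq> Vac" using v in_set_takeD by fastforce
  then have t: "takeWhile (\<lambda>c. c \<noteq> Vac) (take g ws @ Vac # drop g ws) = take g ws"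
    by (simp add: takeWhile_append2)
  have "filter (\<lambda>c. c \<noteq> Vac) (take g ws) = take g ws"
    using v in_set_takeD by (fastforce intro: filter_True)
  moreover have "filter (\<lambda>c. c \<noteq> Vac) (drop g ws) = drop g ws"
    using v in_set_dropD by (fastforce intro: filter_True)
  ultimately have "filter (\<lambda>c. c \<noteq> Vac) (take g ws @ Vac # drop g ws) = ws" by simp
  then show ?thesis using t g by (simp add: decode_def insert_vac_def)
qed

lemma phi_insert_vac:
  assumes "word n m ws" "g \<le> n + m"
  shows "phi n m (insert_vac ws g) = phi_w n m ws g"
  using assms decode_insert_vac[OF word_Vac_notin[OF assms(1)], of g]
    by (simp add: phi_def word_def)

lemma psi_insert_vac:
  assumes "word n m ws" "g \<le> n + m"
  shows "psi n m (insert_vac ws g) = psi_w n m ws g"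
  using assms decode_insert_vac[OF word_Vac_notin[OF assms(1)], of g]
    by (simp add: psi_def word_def)

lemma legal_move_lipschitz:
  assumes v: "valid_config n m x" and lm: "legal_move x y"
  shows "valid_config n m y \<and> \<bar>phi n m x - phi n m y\<bar> \<le> 1 \<and> \<bar>psi n m x - psi n m y\<bar> \<le> 1"
proof -
  obtain ws g where x: "x = insert_vac ws g" and w: "word n m ws" and g: "g \<le> n + m"
    using v by (auto simp: valid_config_def)
  have len: "length ws = n + m" using w by (simp add: word_def)
  have step: "valid_config n m y \<and> \<bar>phi n m x - phi n m y\<bar> \<le> 1 \<and> \<bar>psi n m x - psi n m y\<bar> \<le> 1"
    if "y = insert_vac ws' g'" "word n m ws'" "g' \<le> n + m"
      "\<bar>phi_w n m ws g - phi_w n m ws' g'\<bar> \<le> 1 \<and> \<bar>psi_w n m ws g - psi_w n m ws' g'\<bar> \<le> 1"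
    for ws' g'
    using that x phi_insert_vac[OF w g] psi_insert_vac[OF w g] phi_insert_vac[of n m ws' g']
      psi_insert_vac[of n m ws' g'] by (auto simp: valid_config_def)
  have gl: "g \<le> length ws" using g len by simp
  from legal_move_insert_vac_cases[OF word_Vac_notin[OF w] gl lm[unfolded x]] show ?thesis
  proof (elim disjE conjE)
    assume "g < length ws" "y = insert_vac ws (Suc g)"
    then show ?thesis using step w gap_lipschitz len by simp
  next
    assume "0 < g" "y = insert_vac ws (g - 1)"
    then show ?thesis using step w gap_lipschitz g by simp
  next
    assume a: "Suc g < length ws" "y = insert_vac (swap_at ws g) (g + 2)"
    then show ?thesis
      using step word_swap_at[OF w a(1)] jump_lipschitz[OF w a(1), of g "g + 2"] len by simp
  next
    assume a: "2 \<le> g" "y = insert_vac (swap_at ws (g - 2)) (g - 2)"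
    then have p: "Suc (g - 2) < length ws" using g len by simp
    then show ?thesis
      using a step word_swap_at[OF w p] jump_lipschitz[OF w p, of g "g - 2"] g by simp
  qed
qed

abbreviation start_word :: "nat \<Rightarrow> nat \<Rightarrow> cell list" where
  "start_word n m \<equiv> replicate n Blk @ replicate m Wht"

abbreviation final_word :: "nat \<Rightarrow> nat \<Rightarrow> cell list" where
  "final_word n m \<equiv> replicate m Wht @ replicate n Blk"

lemma word_start: "word n m (start_word n m)"
  by (auto simp: word_def whites_replicate_BW)

lemma word_final: "word n m (final_word n m)"
  by (auto simp: word_def whites_replicate_WB)

lemma init_config_eq: "init_config n m = insert_vac (start_word n m) n"
  by (simp add: init_config_def insert_vac_def)

lemma final_config_eq: "final_config n m = insert_vac (final_word n m) m"
  by (simp add: final_config_def insert_vac_def)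

lemma passed_start: "passed n m (start_word n m) = {}"
  by (auto simp: passed_def mem_grid whites_replicate_BW)

lemma passed_final: "passed n m (final_word n m) = grid n m"
  by (auto simp: passed_def mem_grid whites_replicate_WB)

lemma height_range_split: "{- int n..int m} = {- int n, int m} \<union> {- int n<..<int m}"
  by auto

lemma phi_init:
  assumes "1 \<le> n" "1 \<le> m"
  shows "phi n m (init_config n m) = int (n * m + n + m)"
proof -
  have U: "unpassed n m (start_word n m) = grid n m" using passed_start by (simp add: unpassed_def)
  have h: "height (start_word n m) n = - int n" "whites n (start_word n m) = 0"
    by (auto simp: height_def whites_replicate_BW)
  have L: "diags (grid n m) (int m) (- int n) = {- int n..int m}"
    unfolding diags_def diag_image_grid[OF assms] height_range_split by auto
  have nb: "\<not> defect (grid n m) (grid n m) (int m) (- int n) 0 preds"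
    using diag_grid assms by (force simp: defect_def)
  have P: "phi n m (init_config n m) = phi_w n m (start_word n m) n"
    using phi_insert_vac[OF word_start, of n n m] init_config_eq by simp
  show ?thesis unfolding P using nb
    by (simp add: phi_w_def U h L card_grid potential_def)
qed

lemma phi_final: "phi n m (final_config n m) = 0"
proof -
  have U: "unpassed n m (final_word n m) = {}" using passed_final by (simp add: unpassed_def)
  have h: "height (final_word n m) m = int m" by (auto simp: height_def whites_replicate_WB)
  have P: "phi n m (final_config n m) = phi_w n m (final_word n m) m"
    using phi_insert_vac[OF word_final, of m n m] final_config_eq by simp
  show ?thesis unfolding P by (simp add: phi_w_def U h potential_def diags_def defect_def)
qed

lemma psi_init: "psi n m (init_config n m) = 0"
proof -
  have h: "height (start_word n m) n = - int n" by (auto simp: height_def whites_replicate_BW)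
  have P: "psi n m (init_config n m) = psi_w n m (start_word n m) n"
    using psi_insert_vac[OF word_start, of n n m] init_config_eq by simp
  show ?thesis unfolding P
    by (simp add: psi_w_def passed_start h potential_def diags_def defect_def)
qed

text \<open>Every pair is passed or unpassed, and every height from \<open>-n\<close> to \<open>m\<close> lies in the
  diagonal set of one of them, while the current height lies in both.\<close>

lemma potentials_sum:
  assumes w: "word n m ws" and g: "g \<le> n + m" and n: "1 \<le> n" and m: "1 \<le> m"
  defines "c \<equiv> height ws g"
  shows "int (n * m + n + m) \<le> psi_w n m ws g + phi_w n m ws g"
    and "psi_w n m ws g + phi_w n m ws g = int (n * m + n + m) \<Longrightarrow>
         \<not> defect (grid n m) (passed n m ws) (- int n) c (whites g ws) succs \<and>
         \<not> defect (grid n m) (unpassed n m ws) (int m) c (whites g ws) preds \<and>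
         diags (passed n m ws) (- int n) c \<inter> diags (unpassed n m ws) (int m) c = {c}"
proof -
  let ?F = "passed n m ws" and ?U = "unpassed n m ws"
  let ?A = "diags ?F (- int n) c" and ?B = "diags ?U (int m) c"
  have cFU: "card ?F + card ?U = n * m"
  proof -
    have "card ?F + card ?U = card (?F \<union> ?U)"
      by (rule card_Un_disjoint[symmetric]) (auto simp: unpassed_def)
    also have "?F \<union> ?U = grid n m" using passed_subset by (auto simp: unpassed_def)
    finally show ?thesis using card_grid by simp
  qed
  have sub: "{- int n..int m} \<subseteq> ?A \<union> ?B"
  proof -
    have "diag ` grid n m \<subseteq> diag ` ?F \<union> diag ` ?U" by (auto simp: unpassed_def)
    then show ?thesis unfolding height_range_split diag_image_grid[OF n m, symmetric] diags_def
      by auto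
  qed
  have fA: "finite ?A" "finite ?B" by auto
  have u: "n + m + 1 \<le> card (?A \<union> ?B)"
    using card_mono[OF _ sub] fA by simp
  have cin: "c \<in> ?A \<inter> ?B" by (simp add: diags_def)
  have i1: "1 \<le> card (?A \<inter> ?B)"
    using cin fA by (metis One_nat_def Suc_leI card_gt_0_iff empty_iff finite_Int)
  have cui: "card ?A + card ?B = card (?A \<union> ?B) + card (?A \<inter> ?B)"
    using card_Un_Int[OF fA] by simp
  have eq: "psi_w n m ws g + phi_w n m ws g = int (card ?F + card ?U) + int (card ?A + card ?B) - 2
      + (if defect (grid n m) ?F (- int n) c (whites g ws) succs then 1 else 0)
      + (if defect (grid n m) ?U (int m) c (whites g ws) preds then 1 else 0)"
    by (simp add: psi_w_def phi_w_def potential_def c_def)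
  show "int (n * m + n + m) \<le> psi_w n m ws g + phi_w n m ws g"
    unfolding eq cFU cui using u i1 by simp
  assume T: "psi_w n m ws g + phi_w n m ws g = int (n * m + n + m)"
  have nb: "\<not> defect (grid n m) ?F (- int n) c (whites g ws) succs \<and>
      \<not> defect (grid n m) ?U (int m) c (whites g ws) preds"
    using T unfolding eq cFU cui using u i1 by (auto split: if_splits)
  have c1: "card (?A \<inter> ?B) = 1" using T unfolding eq cFU cui using u i1 by (auto split: if_splits)
  have "?A \<inter> ?B = {c}"
  proof -
    obtain z where "?A \<inter> ?B = {z}" using c1 card_1_singletonE by blast
    then show ?thesis using cin by auto
  qed
  then show "\<not> defect (grid n m) ?F (- int n) c (whites g ws) succs \<and>
      \<not> defect (grid n m) ?U (int m) c (whites g ws) preds \<and> ?A \<inter> ?B = {c}"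
    using nb by simp
qed

lemma path_valid_config:
  assumes p: "is_path p" "hd p = init_config n m"
  shows "k < length p \<Longrightarrow> valid_config n m (p ! k)"
proof (induction k)
  case 0
  have "p \<noteq> []" using p by (simp add: is_path_def)
  then have "p ! 0 = insert_vac (start_word n m) n" using p(2) init_config_eq hd_conv_nth by metis
  then show ?case unfolding valid_config_def
    using word_start[of n m] by (intro exI[of _ "start_word n m"] exI[of _ n]) simp
next
  case (Suc k)
  then have "legal_move (p ! k) (p ! Suc k)" using p by (simp add: is_path_def)
  then show ?case using legal_move_lipschitz Suc by simp
qed

lemma path_lipschitz:
  assumes p: "is_path p" "hd p = init_config n m" and kj: "k \<le> j" and j: "j < length p"
  shows "\<bar>phi n m (p ! k) - phi n m (p ! j)\<bar> \<le> int (j - k) \<and>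
         \<bar>psi n m (p ! k) - psi n m (p ! j)\<bar> \<le> int (j - k)"
  using kj j
proof (induction j rule: dec_induct)
  case base
  then show ?case by simp
next
  case (step j)
  have v: "valid_config n m (p ! j)" using path_valid_config[OF p] step by simp
  have "legal_move (p ! j) (p ! Suc j)" using p step by (simp add: is_path_def)
  then have "\<bar>phi n m (p ! j) - phi n m (p ! Suc j)\<bar> \<le> 1 \<and>
      \<bar>psi n m (p ! j) - psi n m (p ! Suc j)\<bar> \<le> 1"
    using legal_move_lipschitz[OF v] by simp
  moreover have "\<bar>phi n m (p ! k) - phi n m (p ! j)\<bar> \<le> int (j - k) \<and>
      \<bar>psi n m (p ! k) - psi n m (p ! j)\<bar> \<le> int (j - k)"
    using step by simp
  moreover have "int (Suc j - k) = int (j - k) + 1" using step by simp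
  ultimately show ?case by linarith
qed

lemma solution_ends:
  assumes "solution n m q"
  shows "q \<noteq> []" "q ! 0 = init_config n m" "q ! (length q - 1) = final_config n m"
  using assms by (auto simp: solution_def is_path_def hd_conv_nth last_conv_nth)

lemma solution_length:
  assumes s: "solution n m q" and n: "1 \<le> n" and m: "1 \<le> m"
  shows "n * m + n + m + 1 \<le> length q"
proof -
  note f = solution_ends[OF s]
  have p: "is_path q" "hd q = init_config n m" using s by (auto simp: solution_def)
  have "\<bar>phi n m (q ! 0) - phi n m (q ! (length q - 1))\<bar> \<le> int (length q - 1 - 0)"
    using path_lipschitz[OF p, of 0 "length q - 1"] f(1) by simp
  then have "int (n * m + n + m) \<le> int (length q - 1)" using f phi_init[OF n m] phi_final by simp
  then have "n * m + n + m \<le> length q - 1" by (simp only: of_nat_le_iff)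
  then show ?thesis using f(1) by (cases q) auto
qed

lemma optimal_potentials:
  assumes s: "solution n m q" and n: "1 \<le> n" and m: "1 \<le> m" and L: "length q = n * m + n + m + 1"
    and k: "k < length q"
  shows "psi n m (q ! k) = int k \<and> phi n m (q ! k) = int (n * m + n + m - k)"
proof -
  note f = solution_ends[OF s]
  have p: "is_path q" "hd q = init_config n m" using s by (auto simp: solution_def)
  have a: "psi n m (q ! k) \<le> int k"
    using path_lipschitz[OF p, of 0 k] k f(2) psi_init by auto
  have b: "phi n m (q ! k) \<le> int (n * m + n + m - k)"
    using path_lipschitz[OF p, of k "length q - 1"] k f(3) phi_final L by auto
  obtain ws g where x: "q ! k = insert_vac ws g" and w: "word n m ws" and g: "g \<le> n + m"
    using path_valid_config[OF p k] by (auto simp: valid_config_def)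
  have "int (n * m + n + m) \<le> psi n m (q ! k) + phi n m (q ! k)"
    using potentials_sum(1)[OF w g n m] x phi_insert_vac[OF w g] psi_insert_vac[OF w g] by simp
  then show ?thesis using a b k L by linarith
qed

lemma legal_move_word_cases:
  assumes w: "word n m ws" and g: "g \<le> n + m" and lm: "legal_move (insert_vac ws g) y"
  shows "(\<exists>g'. y = insert_vac ws g' \<and> g' \<le> n + m \<and>
            (g' = g + 1 \<or> g' + 1 = g \<or> g' = g + 2 \<or> g' + 2 = g)) \<or>
         (\<exists>p g'. Suc p < length ws \<and> ws ! p = Blk \<and> ws ! Suc p = Wht \<and>
            ((g = p \<and> g' = p + 2) \<or> (g = p + 2 \<and> g' = p)) \<and> y = insert_vac (swap_at ws p) g') \<or>
         (\<exists>p g'. Suc p < length ws \<and> ws ! p = Wht \<and> ws ! Suc p = Blk \<and>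
            ((g = p \<and> g' = p + 2) \<or> (g = p + 2 \<and> g' = p)) \<and> y = insert_vac (swap_at ws p) g')"
    (is "?A \<or> ?B \<or> ?C")
proof -
  have len: "length ws = n + m" using w by (simp add: word_def)
  have gl: "g \<le> length ws" using g len by simp
  have jump: "\<And>p g'. Suc p < length ws \<Longrightarrow> ((g = p \<and> g' = p + 2) \<or> (g = p + 2 \<and> g' = p)) \<Longrightarrow>
      y = insert_vac (swap_at ws p) g' \<Longrightarrow> ?A \<or> ?B \<or> ?C"
  proof -
    fix p g'
    assume a: "Suc p < length ws" "(g = p \<and> g' = p + 2) \<or> (g = p + 2 \<and> g' = p)"
      "y = insert_vac (swap_at ws p) g'"
    have l1: "ws ! p = Blk \<or> ws ! p = Wht" using word_nth[OF w] a(1) by simp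
    have l2: "ws ! Suc p = Blk \<or> ws ! Suc p = Wht" using word_nth[OF w a(1)] .
    show "?A \<or> ?B \<or> ?C"
    proof (cases "ws ! p = ws ! Suc p")
      case True
      then have "y = insert_vac ws g'" using swap_at_same[OF a(1)] a(3) by simp
      moreover have "g' \<le> n + m" using a len by auto
      moreover have "g' = g + 2 \<or> g' + 2 = g" using a(2) by auto
      ultimately show ?thesis by blast
    next
      case False
      then have "(ws ! p = Blk \<and> ws ! Suc p = Wht) \<or> (ws ! p = Wht \<and> ws ! Suc p = Blk)"
        using l1 l2 by auto
      then show ?thesis using a by blast
    qed
  qed
  from legal_move_insert_vac_cases[OF word_Vac_notin[OF w] gl lm] show ?thesis
  proof (elim disjE conjE)
    assume "g < length ws" "y = insert_vac ws (Suc g)"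
    then show ?thesis using len by (intro disjI1 exI[of _ "Suc g"]) simp
  next
    assume "0 < g" "y = insert_vac ws (g - 1)"
    then show ?thesis using g by (intro disjI1 exI[of _ "g - 1"]) simp
  next
    assume "Suc g < length ws" "y = insert_vac (swap_at ws g) (g + 2)"
    then show ?thesis using jump[of g "g + 2"] by simp
  next
    assume a: "2 \<le> g" "y = insert_vac (swap_at ws (g - 2)) (g - 2)"
    have "Suc (g - 2) < length ws" using a gl by simp
    moreover have "g = g - 2 + 2" using a by simp
    ultimately show ?thesis using jump[of "g - 2" "g - 2"] a by simp
  qed
qed

lemma diags_cap_height:
  assumes cap: "diags F e c \<inter> diags U e' c = {c}" and "s1 \<in> U" "s \<in> F" "diag s1 = diag s"
  shows "diag s = c"
proof -
  have "diag s \<in> diag ` U" using assms(2,4) by (metis image_eqI)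
  then have "diag s \<in> diags F e c \<inter> diags U e' c" using assms(3) by (auto simp: diags_def)
  then show ?thesis using cap by blast
qed

lemma passed_below_height:
  assumes n: "1 \<le> n" and m: "1 \<le> m"
    and nbf: "\<not> defect (grid n m) (unpassed n m ws) (int m) c i0 preds"
    and cap: "diags (passed n m ws) (- int n) c \<inter> diags (unpassed n m ws) (int m) c = {c}"
    and cr: "- int n < c" "c < int m"
  shows "\<forall>s\<in>grid n m. diag s < c \<longrightarrow> s \<in> passed n m ws"
proof (rule ccontr)
  assume contra: "\<not> ?thesis"
  let ?F = "passed n m ws" and ?U = "unpassed n m ws"
  note pure = diags_cap_height[OF cap]
  have UF: "\<And>s. s \<in> grid n m \<Longrightarrow> s \<notin> ?F \<Longrightarrow> s \<in> ?U" by (simp add: unpassed_def)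
  obtain s0 where s0: "s0 \<in> ?U" "diag s0 < c" using contra UF by blast
  let ?A = "diag ` {s \<in> ?U. diag s < c}"
  have fA: "finite ?A" by simp
  have neA: "?A \<noteq> {}" using s0 by blast
  define c1 where "c1 = Max ?A"
  have c1A: "c1 \<in> ?A" using Max_in[OF fA neA] c1_def by simp
  then obtain s1 where s1: "s1 \<in> ?U" "diag s1 = c1" "c1 < c" by auto
  have maxA: "\<And>s. s \<in> ?U \<Longrightarrow> diag s < c \<Longrightarrow> diag s \<le> c1" using Max_ge[OF fA] c1_def by auto
  have c1n: "- int n < c1" using diag_grid s1 unpassed_subset by fastforce
  have pu: "\<And>s. s \<in> grid n m \<Longrightarrow> diag s = c1 \<Longrightarrow> s \<in> ?U"
  proof -
    fix s assume "s \<in> grid n m" "diag s = c1"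
    show "s \<in> ?U"
    proof (rule ccontr)
      assume "s \<notin> ?U"
      then have "s \<in> ?F" using \<open>s \<in> grid n m\<close> by (simp add: unpassed_def)
      have "diag s = c" by (rule pure[OF s1(1) \<open>s \<in> ?F\<close>]) (use s1 \<open>diag s = c1\<close> in simp)
      then show False using s1 \<open>diag s = c1\<close> by simp
    qed
  qed
  have c1e: "c1 = c - 1"
  proof (rule ccontr)
    assume "c1 \<noteq> c - 1"
    then have lt: "c1 + 1 < c" using s1 by simp
    obtain s2 where s2: "s2 \<in> grid n m" "diag s2 = c1 + 1"
      using diag_grid_exists[OF n m, of "c1 + 1"] c1n lt cr by auto
    have "s2 \<notin> ?U" using maxA[of s2] s2 lt by auto
    then have s2F: "s2 \<in> ?F" using s2 by (simp add: unpassed_def)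
    obtain p' where p': "p' \<in> preds s2" "p' \<in> grid n m" "diag p' = c1"
      using preds_prev_diag[OF s2(1)] s2 c1n by auto
    have "p' \<notin> ?U" using preds_passed[OF s2F] p' by blast
    then show False using pu[OF p'(2,3)] by simp
  qed
  obtain s3 where s3: "s3 \<in> grid n m" "diag s3 = c" using diag_grid_exists[OF n m] cr by blast
  obtain p' where p': "p' \<in> preds s3" "p' \<in> grid n m" "diag p' = c - 1"
    using preds_prev_diag[OF s3(1)] s3 c1n c1e by auto
  have p'U: "p' \<in> ?U" using pu[OF p'(2)] p'(3) c1e by simp
  have "s3 \<notin> ?F" using preds_passed[of s3 n m ws] p'(1) p'U by blast
  then have "s3 \<in> ?U" using UF s3 by blast
  then show False using nbf s3 p' p'U by (auto simp: defect_def)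
qed

lemma unpassed_above_height:
  assumes n: "1 \<le> n" and m: "1 \<le> m"
    and nbs: "\<not> defect (grid n m) (passed n m ws) (- int n) c i0 succs"
    and cap: "diags (passed n m ws) (- int n) c \<inter> diags (unpassed n m ws) (int m) c = {c}"
    and cr: "- int n < c" "c < int m"
  shows "\<forall>s\<in>grid n m. c < diag s \<longrightarrow> s \<in> unpassed n m ws"
proof (rule ccontr)
  assume contra: "\<not> ?thesis"
  let ?F = "passed n m ws" and ?U = "unpassed n m ws"
  note pure = diags_cap_height[OF cap]
  obtain s0 where s0: "s0 \<in> ?F" "c < diag s0" using contra by (auto simp: unpassed_def)
  let ?B = "diag ` {s \<in> ?F. c < diag s}"
  have fB: "finite ?B" by simp
  have neB: "?B \<noteq> {}" using s0 by blast
  define c1 where "c1 = Min ?B"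
  have c1B: "c1 \<in> ?B" using Min_in[OF fB neB] c1_def by simp
  then obtain s1 where s1: "s1 \<in> ?F" "diag s1 = c1" "c < c1" by auto
  have minB: "\<And>s. s \<in> ?F \<Longrightarrow> c < diag s \<Longrightarrow> c1 \<le> diag s" using Min_le[OF fB] c1_def by auto
  have c1m: "c1 < int m" using diag_grid s1 passed_subset by fastforce
  have pu: "\<And>s. s \<in> grid n m \<Longrightarrow> diag s = c1 \<Longrightarrow> s \<in> ?F"
  proof -
    fix s assume "s \<in> grid n m" "diag s = c1"
    show "s \<in> ?F"
    proof (rule ccontr)
      assume "s \<notin> ?F"
      then have "s \<in> ?U" using \<open>s \<in> grid n m\<close> by (simp add: unpassed_def)
      have "diag s1 = c" by (rule pure[OF \<open>s \<in> ?U\<close> s1(1)]) (use s1 \<open>diag s = c1\<close> in simp)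
      then show False using s1 by simp
    qed
  qed
  have c1e: "c1 = c + 1"
  proof (rule ccontr)
    assume "c1 \<noteq> c + 1"
    then have lt: "c < c1 - 1" using s1 by simp
    obtain s2 where s2: "s2 \<in> grid n m" "diag s2 = c1 - 1"
      using diag_grid_exists[OF n m, of "c1 - 1"] c1m lt cr by auto
    have "s2 \<notin> ?F" using minB[of s2] s2 lt by auto
    obtain p' where p': "p' \<in> succs s2" "p' \<in> grid n m" "diag p' = c1"
      using succs_next_diag[OF s2(1)] s2 c1m by auto
    have "p' \<notin> ?F" using succs_unpassed[OF s2(1) \<open>s2 \<notin> ?F\<close>] p' by blast
    then show False using pu[OF p'(2,3)] by simp
  qed
  obtain s3 where s3: "s3 \<in> grid n m" "diag s3 = c" using diag_grid_exists[OF n m] cr by blast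
  obtain p' where p': "p' \<in> succs s3" "p' \<in> grid n m" "diag p' = c + 1"
    using succs_next_diag[OF s3(1)] s3 c1m c1e by auto
  have p'F: "p' \<in> ?F" using pu[OF p'(2)] p'(3) c1e by simp
  have "s3 \<in> ?F" using succs_unpassed[OF s3(1)] p'(1) p'F by blast
  then show False using nbs s3 p' p'F by (auto simp: defect_def)
qed

lemma swap_WB_psi_le:
  assumes w: "word n m ws" and p: "Suc p < length ws" and b: "ws ! p = Wht" and ww: "ws ! Suc p = Blk"
    and gg: "(g = p \<and> g' = p + 2) \<or> (g = p + 2 \<and> g' = p)"
  shows "psi n m (insert_vac (swap_at ws p) g') \<le> psi_w n m ws g"
proof -
  let ?v = "swap_at ws p"
  obtain q where q: "q \<in> passed n m ws" "passed n m ?v = passed n m ws - {q}"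
    "height ?v g' = height ws g" "word n m ?v" "g' \<le> n + m"
    using swap_WB_facts[OF w p b ww gg] by blast
  have "psi n m (insert_vac ?v g') =
      potential (grid n m) (passed n m ws - {q}) (- int n) (height ws g) (whites g' ?v) succs"
    using psi_insert_vac[OF q(4,5)] q(2,3) by (simp add: psi_w_def)
  also have "\<dots> \<le>
      potential (grid n m) (insert q (passed n m ws - {q})) (- int n) (height ws g) (whites g ws) succs"
    by (rule potential_insert_mono) auto
  also have "insert q (passed n m ws - {q}) = passed n m ws" using q(1) by auto
  finally show ?thesis by (simp add: psi_w_def)
qed

lemma height_step:
  assumes w: "word n m ws" and g: "g \<le> n + m" and g': "g' \<le> n + m"
    and up: "height ws g' = height ws g + 1"
    and near: "g' = g + 1 \<or> g' + 1 = g \<or> g' = g + 2 \<or> g' + 2 = g"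
  shows "(g' = g + 1 \<and> g < length ws \<and> ws ! g = Wht) \<or> (g' + 1 = g \<and> ws ! g' = Blk)"
proof -
  have len: "length ws = n + m" using w by (simp add: word_def)
  have step: "whites (Suc k) ws = whites k ws + (if ws ! k = Wht then 1 else 0)" if "k < length ws" for k
    using that
    by (simp add: whites_Suc)
  from near show ?thesis
  proof (elim disjE)
    assume e: "g' = g + 1"
    then have "g < length ws" using g' len by simp
    then show ?thesis using up e step[of g] by (auto simp: height_def split: if_splits)
  next
    assume e: "g' + 1 = g"
    then have "g' < length ws" using g len by simp
    then show ?thesis
      using up e step[of g'] word_nth[OF w, of g'] by (auto simp: height_def split: if_splits)
  next
    assume e: "g' = g + 2"
    then have "g < length ws" "Suc g < length ws" using g' len by auto
    then show ?thesis using up e step[of g] step[of "Suc g"]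
      by (auto simp: height_def numeral_2_eq_2 split: if_splits)
  next
    assume e: "g' + 2 = g"
    then have "g' < length ws" "Suc g' < length ws" using g len by auto
    then show ?thesis using up e step[of g'] step[of "Suc g'"]
      by (auto simp: height_def numeral_2_eq_2 split: if_splits)
  qed
qed

text \<open>Runs on a completely filled diagonal next to a diagonal consisting of a single column can
  only occur in a corner of the grid.\<close>

lemma corner_of_run_from:
  assumes m: "2 \<le> m" and i0: "i0 < m" and j0: "1 \<le> j0" "j0 \<le> n"
    and full: "\<forall>s\<in>grid n m. diag s = int i0 - int j0 \<longrightarrow> s \<in> F"
    and run: "run_from (grid n m) F (int i0 - int j0) i0"
    and upper: "\<forall>s\<in>grid n m. diag s = int i0 - int j0 + 1 \<longrightarrow> fst s = i0"
  shows "i0 = 0 \<and> j0 = n"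
proof -
  have i00: "i0 = 0"
  proof (rule ccontr)
    assume "i0 \<noteq> 0"
    define s where "s = (i0 - 1, j0 - 1)"
    have "s \<in> grid n m" "diag s = int i0 - int j0"
      using \<open>i0 \<noteq> 0\<close> i0 j0 by (auto simp: s_def mem_grid diag_def)
    then have "i0 \<le> fst s" using run full unfolding run_from_def by blast
    then show False using \<open>i0 \<noteq> 0\<close> by (simp add: s_def)
  qed
  have "j0 = n"
  proof (rule ccontr)
    assume "j0 \<noteq> n"
    define s where "s = (1::nat, j0)"
    have "s \<in> grid n m" "diag s = int i0 - int j0 + 1"
      using \<open>j0 \<noteq> n\<close> j0 m i00 by (auto simp: s_def mem_grid diag_def)
    then show False using upper i00 by (auto simp: s_def)
  qed
  then show ?thesis using i00 by simp
qed

lemma corner_of_run_below: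
  assumes n: "2 \<le> n" and i0: "i0 < m" and j0: "1 \<le> j0" "j0 \<le> n"
    and full: "\<forall>s\<in>grid n m. diag s = int i0 - int j0 \<longrightarrow> s \<in> F"
    and run: "run_below (grid n m) F (int i0 - int j0) i0"
    and upper: "\<forall>s\<in>grid n m. diag s = int i0 - int j0 + 1 \<longrightarrow> fst s = i0"
  shows "i0 = 0 \<and> j0 = n"
proof -
  have j0n: "j0 = n"
  proof (rule ccontr)
    assume "j0 \<noteq> n"
    define s where "s = (i0, j0)"
    have "s \<in> grid n m" "diag s = int i0 - int j0"
      using \<open>j0 \<noteq> n\<close> j0 i0 by (auto simp: s_def mem_grid diag_def)
    then have "fst s < i0" using run full unfolding run_below_def by blast
    then show False by (simp add: s_def)
  qed
  have "i0 = 0"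
  proof (rule ccontr)
    assume "i0 \<noteq> 0"
    define s where "s = (i0 - 1, j0 - 2)"
    have "s \<in> grid n m" "diag s = int i0 - int j0 + 1"
      using \<open>i0 \<noteq> 0\<close> j0n n i0 by (auto simp: s_def mem_grid diag_def)
    then show False using upper \<open>i0 \<noteq> 0\<close> by (auto simp: s_def)
  qed
  then show ?thesis using j0n by simp
qed

text \<open>Along an optimal solution every configuration is tight (the potentials add up to their
  lower bound) and every move is \<open>forward\<close>.  The positivity assumptions exclude the initial and
  the final configuration.\<close>

locale tight_config =
  fixes n m :: nat and ws :: "cell list" and g :: nat
  assumes n: "2 \<le> n" and m: "2 \<le> m" and w: "word n m ws" and g: "g \<le> n + m"
    and tight: "psi_w n m ws g + phi_w n m ws g = int (n * m + n + m)"
    and psi_pos: "1 \<le> psi_w n m ws g" and phi_pos: "1 \<le> phi_w n m ws g"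
begin

abbreviation vh :: int where "vh \<equiv> height ws g"

abbreviation vw :: nat where "vw \<equiv> whites g ws"

definition forward :: "config \<Rightarrow> bool" where
  "forward y \<longleftrightarrow> legal_move (insert_vac ws g) y \<and>
     psi n m y = psi_w n m ws g + 1 \<and> phi n m y = phi_w n m ws g - 1"

definition keeps_word :: "config \<Rightarrow> bool" where
  "keeps_word y \<longleftrightarrow>
     (\<exists>g'. y = insert_vac ws g' \<and> g' \<le> n + m \<and> (g' = g + 1 \<or> g' + 1 = g \<or> g' = g + 2 \<or> g' + 2 = g))"

definition passes_pair :: "config \<Rightarrow> bool" where
  "passes_pair y \<longleftrightarrow> (\<exists>p g'. Suc p < length ws \<and> ws ! p = Blk \<and> ws ! Suc p = Wht \<and>
     ((g = p \<and> g' = p + 2) \<or> (g = p + 2 \<and> g' = p)) \<and> y = insert_vac (swap_at ws p) g')"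

lemma length_ws: "length ws = n + m"
  using w by (simp add: word_def)

lemma n1: "1 \<le> n" and m1: "1 \<le> m"
  using n m by auto

lemma no_defect_passed: "\<not> defect (grid n m) (passed n m ws) (- int n) vh vw succs"
  and no_defect_unpassed: "\<not> defect (grid n m) (unpassed n m ws) (int m) vh vw preds"
  and diags_cap: "diags (passed n m ws) (- int n) vh \<inter> diags (unpassed n m ws) (int m) vh = {vh}"
  using potentials_sum(2)[OF w g n1 m1 tight] by auto

lemma vh_interior: "- int n < vh" "vh < int m"
proof -
  have "vh \<noteq> - int n"
  proof
    assume h: "vh = - int n"
    then have "passed n m ws = {}" using no_defect_passed by (auto simp: defect_def)
    then have "psi_w n m ws g = 0"
      using no_defect_passed h by (simp add: psi_w_def potential_def diags_def)
    then show False using psi_pos by simp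
  qed
  moreover have "vh \<noteq> int m"
  proof
    assume h: "vh = int m"
    then have "unpassed n m ws = {}" using no_defect_unpassed by (auto simp: defect_def)
    then have "phi_w n m ws g = 0"
      using no_defect_unpassed h by (simp add: phi_w_def potential_def diags_def)
    then show False using phi_pos by simp
  qed
  ultimately show "- int n < vh" "vh < int m" using height_bounds[OF w g] by auto
qed

lemma unpassed_above: "s \<in> grid n m \<Longrightarrow> vh < diag s \<Longrightarrow> s \<in> unpassed n m ws"
  using unpassed_above_height[OF n1 m1 no_defect_passed diags_cap vh_interior] by auto

lemma forward_insert_vac:
  assumes "forward (insert_vac ws g')" "g' \<le> n + m"
  shows "psi_w n m ws g' = psi_w n m ws g + 1" "phi_w n m ws g' = phi_w n m ws g - 1"
  using assms psi_insert_vac[OF w] phi_insert_vac[OF w] by (auto simp: forward_def)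

lemma forward_cases:
  assumes "forward y"
  shows "keeps_word y \<or> passes_pair y"
proof -
  have lm: "legal_move (insert_vac ws g) y" and up: "psi n m y = psi_w n m ws g + 1"
    using assms by (auto simp: forward_def)
  from legal_move_word_cases[OF w g lm] show ?thesis
  proof (elim disjE)
    assume "\<exists>g'. y = insert_vac ws g' \<and> g' \<le> n + m \<and> (g' = g + 1 \<or> g' + 1 = g \<or> g' = g + 2 \<or> g' + 2 = g)"
    then show ?thesis unfolding keeps_word_def by blast
  next
    assume "\<exists>p g'. Suc p < length ws \<and> ws ! p = Blk \<and> ws ! Suc p = Wht \<and>
        ((g = p \<and> g' = p + 2) \<or> (g = p + 2 \<and> g' = p)) \<and> y = insert_vac (swap_at ws p) g'"
    then show ?thesis unfolding passes_pair_def by blast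
  next
    assume "\<exists>p g'. Suc p < length ws \<and> ws ! p = Wht \<and> ws ! Suc p = Blk \<and>
        ((g = p \<and> g' = p + 2) \<or> (g = p + 2 \<and> g' = p)) \<and> y = insert_vac (swap_at ws p) g'"
    then have "psi n m y \<le> psi_w n m ws g" using swap_WB_psi_le[OF w] by blast
    then show ?thesis using up by simp
  qed
qed

text \<open>If some pair on the diagonal of the vacancy is still unpassed, only a jump passing such a
  pair lowers \<open>phi\<close>, and the pairs waiting there form a single run next to the vacancy.\<close>

lemma forward_unique_if_unpassed_on_diag:
  assumes unp: "\<exists>s\<in>unpassed n m ws. diag s = vh" and y1: "forward y1" and y2: "forward y2"
  shows "y1 = y2"
proof -
  let ?U = "unpassed n m ws"
  have no_keep: "\<not> keeps_word y" if "forward y" for y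
  proof
    assume "keeps_word y"
    then obtain g' where y: "y = insert_vac ws g'" "g' \<le> n + m" unfolding keeps_word_def by blast
    have "vh \<in> diag ` ?U" using unp by force
    then have "card (diags ?U (int m) vh) \<le> card (diags ?U (int m) (height ws g'))"
      by (intro card_mono) (auto simp: diags_def)
    then have "phi_w n m ws g \<le> phi_w n m ws g'"
      using no_defect_unpassed by (simp add: phi_w_def potential_def)
    then show False using forward_insert_vac(2)[OF _ y(2)] that y(1) by simp
  qed
  obtain p1 g1 where f1: "Suc p1 < length ws" "ws ! p1 = Blk" "ws ! Suc p1 = Wht"
    "(g = p1 \<and> g1 = p1 + 2) \<or> (g = p1 + 2 \<and> g1 = p1)" "y1 = insert_vac (swap_at ws p1) g1"
    using forward_cases[OF y1] no_keep[OF y1] unfolding passes_pair_def by blast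
  obtain p2 g2 where f2: "Suc p2 < length ws" "ws ! p2 = Blk" "ws ! Suc p2 = Wht"
    "(g = p2 \<and> g2 = p2 + 2) \<or> (g = p2 + 2 \<and> g2 = p2)" "y2 = insert_vac (swap_at ws p2) g2"
    using forward_cases[OF y2] no_keep[OF y2] unfolding passes_pair_def by blast
  have run: "run_from (grid n m) ?U vh vw \<or> run_below (grid n m) ?U vh vw"
    using no_defect_unpassed unp by (auto simp: defect_def)
  have mixed: False
    if a: "Suc pa < length ws" "ws ! pa = Blk" "ws ! Suc pa = Wht" "g = pa"
      and b: "Suc pb < length ws" "ws ! pb = Blk" "ws ! Suc pb = Wht" "g = pb + 2" for pa pb
  proof -
    define qa where "qa = (whites pa ws, pa - whites pa ws)"
    define qb where "qb = (whites pb ws, pb - whites pb ws)"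
    note fa = swap_BW_facts[OF w a(1-3), of g "pa + 2", folded qa_def]
    note fb = swap_BW_facts[OF w b(1-3), of g pb, folded qb_def]
    have qa: "qa \<in> ?U" "diag qa = vh" "fst qa = vw" using fa a(4) by (auto simp: unpassed_def)
    have qb: "qb \<in> ?U" "diag qb = vh" "Suc (fst qb) = vw" using fb b(4) by (auto simp: unpassed_def)
    from run show False
    proof
      assume "run_from (grid n m) ?U vh vw"
      then have "vw \<le> fst qb" using qb unfolding run_from_def by blast
      then show False using qb by simp
    next
      assume "run_below (grid n m) ?U vh vw"
      then have "fst qa < vw" using qa unfolding run_below_def by blast
      then show False using qa by simp
    qed
  qed
  have "p1 = p2"
    using f1(4) f2(4) mixed[OF f1(1-3) _ f2(1-3)] mixed[OF f2(1-3) _ f1(1-3)] by auto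
  then show ?thesis using f1 f2 by auto
qed

text \<open>Otherwise the diagonal of the vacancy is completely passed and a forward move is a slide
  raising the height by one.\<close>

lemma forward_height:
  assumes diag_passed: "\<forall>s\<in>grid n m. diag s = vh \<longrightarrow> s \<in> passed n m ws"
    and g': "g' \<le> n + m" and psi': "psi_w n m ws g' = psi_w n m ws g + 1"
    and phi': "phi_w n m ws g' = phi_w n m ws g - 1"
  shows "height ws g' = vh + 1"
proof -
  let ?F = "passed n m ws" and ?U = "unpassed n m ws"
  define c' where "c' = height ws g'"
  have tight': "psi_w n m ws g' + phi_w n m ws g' = int (n * m + n + m)"
    using psi' phi' tight by simp
  note sb' = potentials_sum(2)[OF w g' n1 m1 tight', folded c'_def]
  obtain sc where sc: "sc \<in> grid n m" "diag sc = vh"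
    using diag_grid_exists[OF n1 m1 vh_interior] by blast
  have scF: "sc \<in> ?F" using diag_passed sc by simp
  have c'n: "c' \<noteq> - int n"
  proof
    assume "c' = - int n"
    then have "?F = {}" using sb' by (auto simp: defect_def)
    then show False using scF by simp
  qed
  show ?thesis
  proof (cases "c' = int m")
    case True
    then have U0: "?U = {}" using sb' by (auto simp: defect_def)
    have "\<not> vh + 1 < int m"
    proof
      assume "vh + 1 < int m"
      then obtain s where "s \<in> grid n m" "diag s = vh + 1"
        using diag_grid_exists[OF n1 m1, of "vh + 1"] vh_interior by auto
      then have "s \<in> ?U" using unpassed_above by simp
      then show False using U0 by simp
    qed
    then show ?thesis using True vh_interior by (simp add: c'_def)
  next
    case False
    then have cr': "- int n < c'" "c' < int m"
      using height_bounds[OF w g'] c'n by (auto simp: c'_def)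
    have below': "s \<in> grid n m \<Longrightarrow> diag s < c' \<Longrightarrow> s \<in> ?F" for s
      using passed_below_height[OF n1 m1 _ _ cr'] sb' by blast
    have above': "s \<in> grid n m \<Longrightarrow> c' < diag s \<Longrightarrow> s \<in> ?U" for s
      using unpassed_above_height[OF n1 m1 _ _ cr'] sb' by blast
    have "vh + 1 \<le> c'"
    proof (rule ccontr)
      assume "\<not> vh + 1 \<le> c'"
      show False
      proof (cases "c' = vh")
        case True
        have "psi_w n m ws g' \<le> psi_w n m ws g"
          using sb' True by (simp add: psi_w_def potential_def c'_def)
        then show False using psi' by simp
      next
        case False
        then have "c' < vh" using \<open>\<not> vh + 1 \<le> c'\<close> by simp
        then have "sc \<in> ?U" using above' sc by auto
        then show False using scF by (simp add: unpassed_def)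
      qed
    qed
    moreover have "c' \<le> vh + 1"
    proof (rule ccontr)
      assume "\<not> c' \<le> vh + 1"
      then obtain s where s: "s \<in> grid n m" "diag s = vh + 1"
        using diag_grid_exists[OF n1 m1, of "vh + 1"] vh_interior cr' by auto
      then have "s \<in> ?U" using unpassed_above by simp
      moreover have "s \<in> ?F" using below' s \<open>\<not> c' \<le> vh + 1\<close> by auto
      ultimately show False by (simp add: unpassed_def)
    qed
    ultimately show ?thesis by (simp add: c'_def)
  qed
qed

lemma forward_slide:
  assumes diag_passed: "\<forall>s\<in>grid n m. diag s = vh \<longrightarrow> s \<in> passed n m ws" and y: "forward y"
  obtains g' where "y = insert_vac ws g'" "g' \<le> n + m"
    "(g' = g + 1 \<and> g < length ws \<and> ws ! g = Wht) \<or> (g' + 1 = g \<and> ws ! g' = Blk)"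
proof -
  have "\<not> passes_pair y"
  proof
    assume "passes_pair y"
    then obtain p g' where "Suc p < length ws" "ws ! p = Blk" "ws ! Suc p = Wht"
      "(g = p \<and> g' = p + 2) \<or> (g = p + 2 \<and> g' = p)" unfolding passes_pair_def by blast
    note f = swap_BW_facts[OF w this]
    show False using f(1,2,4) diag_passed by auto
  qed
  then obtain g' where g': "y = insert_vac ws g'" "g' \<le> n + m"
    "g' = g + 1 \<or> g' + 1 = g \<or> g' = g + 2 \<or> g' + 2 = g"
    using forward_cases[OF y] unfolding keeps_word_def by blast
  have "height ws g' = vh + 1"
    using forward_height[OF diag_passed g'(2)] forward_insert_vac[OF _ g'(2)] y g'(1) by simp
  then show ?thesis using that g' height_step[OF w g g'(2) _ g'(3)] by simp
qed

text \<open>Both slides cannot be forward: the pairs on the diagonal above the vacancy, all unpassed,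
  would have to form runs ending at the vacancy from either side, so that diagonal would be a
  single pair; together with the runs of passed pairs on the diagonal of the vacancy this forces
  the vacancy into a corner of the grid.\<close>

lemma both_slides_coords:
  assumes "g < length ws" "ws ! g = Wht" "Suc gb = g" "ws ! gb = Blk"
  shows "vw < m" "1 \<le> g - vw" "g - vw \<le> n" "vh = int vw - int (g - vw)"
    "whites (Suc g) ws = Suc vw" "whites gb ws = vw"
proof -
  have set: "set ws \<subseteq> {Blk, Wht}" using w by (simp add: word_def)
  show wg: "whites (Suc g) ws = Suc vw" using assms by (simp add: whites_Suc)
  have "whites (Suc g) ws \<le> m" using whites_mono[of "Suc g" "n + m" ws] assms length_ws w
    by (simp add: word_def)
  then show "vw < m" using wg by simp
  have gb: "gb < length ws" using assms by simp
  show wgb: "whites gb ws = vw" using whites_Suc[of gb ws] assms gb by simp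
  have "blacks g ws = g - vw" using whites_add_blacks[OF set, of g] g length_ws by simp
  moreover have "blacks g ws = Suc (blacks gb ws)" using blacks_Suc[of gb ws] assms gb by simp
  ultimately show "1 \<le> g - vw" by simp
  show "g - vw \<le> n" using height_bounds[OF w g] by simp
  show "vh = int vw - int (g - vw)" using whites_le[of g ws] by (simp add: height_def)
qed

lemma both_slides_upper_diag:
  assumes f1: "forward (insert_vac ws (Suc g))" "g < length ws" "ws ! g = Wht"
    and f2: "forward (insert_vac ws gb)" "Suc gb = g" "ws ! gb = Blk"
    and s: "s \<in> grid n m" "diag s = vh + 1"
  shows "fst s = vw"
proof -
  let ?U = "unpassed n m ws"
  note co = both_slides_coords[OF f1(2,3) f2(2,3)]
  have no_defect_at: "\<not> defect (grid n m) ?U (int m) (vh + 1) (whites g' ws) preds"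
    if "forward (insert_vac ws g')" "g' \<le> n + m" "height ws g' = vh + 1" for g'
  proof -
    have "psi_w n m ws g' + phi_w n m ws g' = int (n * m + n + m)"
      using forward_insert_vac[OF that(1,2)] tight by simp
    then show ?thesis using potentials_sum(2)[OF w that(2) n1 m1] that(3) by simp
  qed
  have h1: "height ws (Suc g) = vh + 1" using co(5) by (simp add: height_def)
  have h2: "height ws gb = vh + 1" using co(6) f2(2) by (auto simp: height_def)
  have nd1: "\<not> defect (grid n m) ?U (int m) (vh + 1) (Suc vw) preds"
    using no_defect_at[OF f1(1) _ h1] co(5) f1(2) length_ws by simp
  have nd2: "\<not> defect (grid n m) ?U (int m) (vh + 1) vw preds"
    using no_defect_at[OF f2(1) _ h2] co(6) f2(2) g by simp
  define qs where "qs = (vw, g - vw - 1)"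
  have qs: "qs \<in> grid n m" "diag qs = vh + 1" using co(1-4) by (auto simp: qs_def mem_grid diag_def)
  have qsU: "qs \<in> ?U" using unpassed_above qs by simp
  have "run_below (grid n m) ?U (vh + 1) (Suc vw)"
  proof -
    have "\<not> run_from (grid n m) ?U (vh + 1) (Suc vw)"
      using qsU qs unfolding run_from_def qs_def by fastforce
    then show ?thesis using nd1 qsU qs by (auto simp: defect_def)
  qed
  moreover have "run_from (grid n m) ?U (vh + 1) vw"
  proof -
    have "\<not> run_below (grid n m) ?U (vh + 1) vw"
      using qsU qs unfolding run_below_def qs_def by fastforce
    then show ?thesis using nd2 qsU qs by (auto simp: defect_def)
  qed
  moreover have "s \<in> ?U" using unpassed_above s by simp
  ultimately have "fst s < Suc vw" "vw \<le> fst s"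
    using s unfolding run_below_def run_from_def by blast+
  then show ?thesis by simp
qed

lemma not_both_slides:
  assumes diag_passed: "\<forall>s\<in>grid n m. diag s = vh \<longrightarrow> s \<in> passed n m ws"
    and f1: "forward (insert_vac ws (Suc g))" "g < length ws" "ws ! g = Wht"
    and f2: "forward (insert_vac ws gb)" "Suc gb = g" "ws ! gb = Blk"
  shows False
proof -
  note co = both_slides_coords[OF f1(2,3) f2(2,3)]
  have full: "\<forall>s\<in>grid n m. diag s = int vw - int (g - vw) \<longrightarrow> s \<in> passed n m ws"
    using diag_passed co(4) by simp
  have upper: "\<forall>s\<in>grid n m. diag s = int vw - int (g - vw) + 1 \<longrightarrow> fst s = vw"
    using both_slides_upper_diag[OF f1 f2] co(4) by simp
  obtain sc where sc: "sc \<in> grid n m" "diag sc = vh"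
    using diag_grid_exists[OF n1 m1 vh_interior] by blast
  have "run_from (grid n m) (passed n m ws) vh vw \<or> run_below (grid n m) (passed n m ws) vh vw"
    using no_defect_passed diag_passed sc by (auto simp: defect_def)
  then have "vw = 0 \<and> g - vw = n"
    using corner_of_run_from[OF m co(1-3) full _ upper] corner_of_run_below[OF n co(1-3) full _ upper]
      co(4) by auto
  then have "int vw - int (g - vw) = - int n" by auto
  then show False using co(4) vh_interior(1) by linarith
qed

theorem forward_unique:
  assumes y1: "forward y1" and y2: "forward y2"
  shows "y1 = y2"
proof (cases "\<exists>s\<in>unpassed n m ws. diag s = vh")
  case True
  then show ?thesis using forward_unique_if_unpassed_on_diag y1 y2 by blast
next
  case False
  then have diag_passed: "\<forall>s\<in>grid n m. diag s = vh \<longrightarrow> s \<in> passed n m ws"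
    by (auto simp: unpassed_def)
  obtain g1 where g1: "y1 = insert_vac ws g1" "g1 \<le> n + m"
    "(g1 = g + 1 \<and> g < length ws \<and> ws ! g = Wht) \<or> (g1 + 1 = g \<and> ws ! g1 = Blk)"
    using forward_slide[OF diag_passed y1] by blast
  obtain g2 where g2: "y2 = insert_vac ws g2" "g2 \<le> n + m"
    "(g2 = g + 1 \<and> g < length ws \<and> ws ! g = Wht) \<or> (g2 + 1 = g \<and> ws ! g2 = Blk)"
    using forward_slide[OF diag_passed y2] by blast
  have "g1 = g2"
    using g1 g2 y1 y2 not_both_slides[OF diag_passed, of g1] not_both_slides[OF diag_passed, of g2]
      by auto
  then show ?thesis using g1 g2 by simp
qed

end

text \<open>After the initial slide it consists of stages \<open>k < n + m - 1\<close>;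
  in stage \<open>k\<close> the middle block \<open>(bw)\<^sup>L\<close>, \<open>L = stage_len n m k\<close>, is turned into \<open>(wb)\<^sup>L\<close> by
  \<open>L\<close> jumps, sweeping the vacancy from right to left for even \<open>k\<close> and from left to right for
  odd \<open>k\<close>.  Consecutive stages are joined by a slide and a final slide ends the solution;
  \<open>nu n m t\<close> is the last configuration of stage \<open>t + n - 1\<close>.\<close>

definition bw_pow :: "nat \<Rightarrow> cell list" where
  "bw_pow k = concat (replicate k [Blk, Wht])"

lemma bw_pow_0 [simp]: "bw_pow 0 = []"
  by (simp add: bw_pow_def)

lemma wb_pow_0 [simp]: "wb_pow 0 = []"
  by (simp add: wb_pow_def)

lemma bw_pow_Suc: "bw_pow (Suc j) = Blk # Wht # bw_pow j"
  by (simp add: bw_pow_def)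

lemma wb_pow_Suc: "wb_pow (Suc j) = Wht # Blk # wb_pow j"
  by (simp add: wb_pow_def)

lemma bw_pow_Suc_app: "bw_pow (Suc j) = bw_pow j @ [Blk, Wht]"
  by (induction j) (auto simp: bw_pow_Suc)

lemma wb_pow_Suc_app: "wb_pow (Suc j) = wb_pow j @ [Wht, Blk]"
  by (induction j) (auto simp: wb_pow_Suc)

lemma Blk_Cons_wb_pow: "Blk # wb_pow j = bw_pow j @ [Blk]"
  by (induction j) (auto simp: bw_pow_Suc wb_pow_Suc)

lemma Wht_Cons_bw_pow_Blk: "Wht # bw_pow j @ [Blk] = wb_pow (Suc j)"
  by (simp add: Blk_Cons_wb_pow[symmetric] wb_pow_Suc)

lemma Blk_Cons_wb_pow_Wht: "Blk # wb_pow j @ [Wht] = bw_pow (Suc j)"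
  by (simp add: Blk_Cons_wb_pow bw_pow_Suc_app)

lemma length_bw_pow [simp]: "length (bw_pow j) = 2 * j"
  by (induction j) (auto simp: bw_pow_Suc)

lemma length_wb_pow [simp]: "length (wb_pow j) = 2 * j"
  by (induction j) (auto simp: wb_pow_Suc)

lemma set_bw_pow: "set (bw_pow j) \<subseteq> {Blk, Wht}"
  by (induction j) (auto simp: bw_pow_Suc)

lemma set_wb_pow: "set (wb_pow j) \<subseteq> {Blk, Wht}"
  by (induction j) (auto simp: wb_pow_Suc)

definition stage_left :: "nat \<Rightarrow> nat \<Rightarrow> cell list" where
  "stage_left n k = replicate (n - 1 - k) Blk @ replicate (k + 1 - n) Wht"

definition stage_right :: "nat \<Rightarrow> nat \<Rightarrow> cell list" where
  "stage_right m k = replicate (m - 1 - k) Wht @ replicate (k + 1 - m) Blk"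

definition stage_len :: "nat \<Rightarrow> nat \<Rightarrow> nat \<Rightarrow> nat" where
  "stage_len n m k = (if k < m then k + 1 else if k < n then m else n + m - 1 - k)"

definition stage_word :: "nat \<Rightarrow> nat \<Rightarrow> nat \<Rightarrow> nat \<Rightarrow> cell list" where
  "stage_word n m k t =
     (if even k then stage_left n k @ bw_pow (stage_len n m k - t) @ wb_pow t @ stage_right m k
      else stage_left n k @ wb_pow t @ bw_pow (stage_len n m k - t) @ stage_right m k)"

definition stage_gap :: "nat \<Rightarrow> nat \<Rightarrow> nat \<Rightarrow> nat \<Rightarrow> nat" where
  "stage_gap n m k t =
     (if even k then length (stage_left n k) + 2 * (stage_len n m k - t)
      else length (stage_left n k) + 2 * t)"

definition stage :: "nat \<Rightarrow> nat \<Rightarrow> nat \<Rightarrow> config list" where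
  "stage n m k =
     map (\<lambda>t. insert_vac (stage_word n m k t) (stage_gap n m k t)) [0..<Suc (stage_len n m k)]"

lemma set_stage_word: "set (stage_word n m k t) \<subseteq> {Blk, Wht}"
  using set_bw_pow set_wb_pow by (auto simp: stage_word_def stage_left_def stage_right_def)

lemma Vac_notin_stage_word: "Vac \<notin> set (stage_word n m k t)"
  using set_stage_word by blast

lemma stage_legal_move:
  assumes t: "t < stage_len n m k"
  shows "legal_move (insert_vac (stage_word n m k t) (stage_gap n m k t))
           (insert_vac (stage_word n m k (Suc t)) (stage_gap n m k (Suc t)))"
proof -
  obtain s where s: "stage_len n m k - t = Suc s" using t by (metis Suc_diff_Suc)
  have s': "stage_len n m k - Suc t = s" using s by simp
  show ?thesis
  proof (cases "even k")
    case True
    let ?A = "stage_left n k @ bw_pow s"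
    have e1: "stage_word n m k t = ?A @ Blk # Wht # (wb_pow t @ stage_right m k)"
      using True s by (simp add: stage_word_def bw_pow_Suc_app)
    have e2: "stage_word n m k (Suc t) = ?A @ Wht # Blk # (wb_pow t @ stage_right m k)"
      using True s' by (simp add: stage_word_def wb_pow_Suc)
    have g1: "stage_gap n m k t = length ?A + 2" using True s by (simp add: stage_gap_def)
    have g2: "stage_gap n m k (Suc t) = length ?A" using True s' by (simp add: stage_gap_def)
    have "legal_move (insert_vac (stage_word n m k t) (length ?A + 2))
        (insert_vac (swap_at (stage_word n m k t) (length ?A + 2 - 2)) (length ?A + 2 - 2))"
      by (rule legal_jump_left[OF Vac_notin_stage_word]) (auto simp: e1)
    moreover have "swap_at (stage_word n m k t) (length ?A) = stage_word n m k (Suc t)"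
      by (simp only: e1 e2 swap_at_append)
    ultimately show ?thesis using g1 g2 by simp
  next
    case False
    let ?A = "stage_left n k @ wb_pow t"
    have e1: "stage_word n m k t = ?A @ Blk # Wht # (bw_pow s @ stage_right m k)"
      using False s by (simp add: stage_word_def bw_pow_Suc)
    have e2: "stage_word n m k (Suc t) = ?A @ Wht # Blk # (bw_pow s @ stage_right m k)"
      using False s' by (simp add: stage_word_def wb_pow_Suc_app)
    have g1: "stage_gap n m k t = length ?A" using False by (simp add: stage_gap_def)
    have g2: "stage_gap n m k (Suc t) = length ?A + 2" using False by (simp add: stage_gap_def)
    have "legal_move (insert_vac (stage_word n m k t) (length ?A))
        (insert_vac (swap_at (stage_word n m k t) (length ?A)) (length ?A + 2))"
      by (rule legal_jump_right[OF Vac_notin_stage_word]) (auto simp: e1)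
    moreover have "swap_at (stage_word n m k t) (length ?A) = stage_word n m k (Suc t)"
      by (simp only: e1 e2 swap_at_append)
    ultimately show ?thesis using g1 g2 by simp
  qed
qed

lemma stage_word_last:
  "stage_word n m k (stage_len n m k) = stage_left n k @ wb_pow (stage_len n m k) @ stage_right m k"
  by (simp add: stage_word_def)

lemma stage_word_first:
  "stage_word n m k 0 = stage_left n k @ bw_pow (stage_len n m k) @ stage_right m k"
  by (simp add: stage_word_def)

lemma stage_left_lo: "Suc k < n \<Longrightarrow> stage_left n k = stage_left n (Suc k) @ [Blk]"
proof -
  assume "Suc k < n"
  then have "n - 1 - k = Suc (n - 1 - Suc k)" "k + 1 - n = 0" "Suc k + 1 - n = 0" by arith+
  then show ?thesis unfolding stage_left_def by (simp add: replicate_append_same)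
qed

lemma stage_left_hi: "n \<le> k \<Longrightarrow> stage_left n (Suc k) = stage_left n k @ [Wht]"
proof -
  assume "n \<le> k"
  then have "Suc k + 1 - n = Suc (k + 1 - n)" "n - 1 - k = 0" "n - 1 - Suc k = 0" by arith+
  then show ?thesis unfolding stage_left_def by (simp add: replicate_append_same)
qed

lemma stage_right_lo: "Suc k < m \<Longrightarrow> stage_right m k = Wht # stage_right m (Suc k)"
proof -
  assume "Suc k < m"
  then have "m - 1 - k = Suc (m - 1 - Suc k)" "k + 1 - m = 0" "Suc k + 1 - m = 0" by arith+
  then show ?thesis unfolding stage_right_def by simp
qed

lemma stage_right_hi: "m \<le> Suc k \<Longrightarrow> stage_right m (Suc k) = Blk # stage_right m k"
proof -
  assume "m \<le> Suc k"
  then have "Suc k + 1 - m = Suc (k + 1 - m)" "m - 1 - k = 0" "m - 1 - Suc k = 0" by arith+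
  then show ?thesis unfolding stage_right_def by simp
qed

lemma stage_word_transition:
  assumes mn: "m \<le> n" and m1: "1 \<le> m" and k: "Suc k < n + m - 1"
  shows "stage_left n k @ wb_pow (stage_len n m k) @ stage_right m k =
    stage_left n (Suc k) @ bw_pow (stage_len n m (Suc k)) @ stage_right m (Suc k)"
proof -
  consider (i) "Suc k < m" | (ii) "Suc k = m" "Suc k < n" | (iii) "Suc k = m" "Suc k = n"
    | (iv) "m \<le> k" "Suc k < n" | (v) "m \<le> k" "Suc k = n" | (vi) "n \<le> k" using mn by linarith
  then show ?thesis
  proof cases
    case i
    have l: "stage_len n m k = Suc k" "stage_len n m (Suc k) = Suc (Suc k)"
      using i by (auto simp: stage_len_def)
    have "Suc k < n" using i mn by simp
    then have x: "stage_left n k = stage_left n (Suc k) @ [Blk]" using stage_left_lo by blast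
    have y: "stage_right m k = Wht # stage_right m (Suc k)" using stage_right_lo[OF i] .
    show ?thesis unfolding l x y using Blk_Cons_wb_pow_Wht[of "Suc k"] by simp
  next
    case ii
    have l: "stage_len n m k = m" "stage_len n m (Suc k) = m" using ii by (auto simp: stage_len_def)
    have x: "stage_left n k = stage_left n (Suc k) @ [Blk]" using stage_left_lo[OF ii(2)] .
    have y: "stage_right m (Suc k) = Blk # stage_right m k" "stage_right m k = []"
      using ii by (auto simp: stage_right_def)
    show ?thesis unfolding l x y using Blk_Cons_wb_pow[of m] by simp
  next
    case iii
    define b where "b = m - 1"
    have b: "m = Suc b" using iii unfolding b_def by arith
    have l: "stage_len n m k = Suc b" "stage_len n m (Suc k) = b"
      using iii b by (auto simp: stage_len_def)
    have x: "stage_left n k = []" "stage_left n (Suc k) = [Wht]"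
      using iii(2)[symmetric] by (simp_all add: stage_left_def)
    have y: "stage_right m (Suc k) = Blk # stage_right m k" "stage_right m k = []"
      using iii by (auto simp: stage_right_def)
    show ?thesis unfolding l x y using Wht_Cons_bw_pow_Blk[of b] by simp
  next
    case iv
    have l: "stage_len n m k = m" "stage_len n m (Suc k) = m" using iv by (auto simp: stage_len_def)
    have x: "stage_left n k = stage_left n (Suc k) @ [Blk]" using stage_left_lo[OF iv(2)] .
    have "m \<le> Suc k" using iv by simp
    then have y: "stage_right m (Suc k) = Blk # stage_right m k" using stage_right_hi by blast
    show ?thesis unfolding l x y using Blk_Cons_wb_pow[of m] by simp
  next
    case v
    define b where "b = m - 1"
    have b: "m = Suc b" using m1 unfolding b_def by arith
    have l: "stage_len n m k = Suc b" "stage_len n m (Suc k) = b"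
      using v b by (auto simp: stage_len_def)
    have x: "stage_left n k = []" "stage_left n (Suc k) = [Wht]"
      using v(2)[symmetric] by (simp_all add: stage_left_def)
    have "m \<le> Suc k" using v by simp
    then have y: "stage_right m (Suc k) = Blk # stage_right m k" using stage_right_hi by blast
    show ?thesis unfolding l x y using Wht_Cons_bw_pow_Blk[of b] by simp
  next
    case vi
    define b where "b = n + m - 2 - k"
    have b: "n + m - 1 - k = Suc b" "n + m - 1 - Suc k = b" using k unfolding b_def by arith+
    have l: "stage_len n m k = Suc b" "stage_len n m (Suc k) = b"
      using vi b mn unfolding stage_len_def by auto
    have x: "stage_left n (Suc k) = stage_left n k @ [Wht]" using stage_left_hi[OF vi] .
    have "m \<le> Suc k" using vi mn by simp
    then have y: "stage_right m (Suc k) = Blk # stage_right m k" using stage_right_hi by blast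
    show ?thesis unfolding l x y using Wht_Cons_bw_pow_Blk[of b] by simp
  qed
qed

lemma sum_lessThan_add: "(\<Sum>k<(a::nat) + b. f k) = (\<Sum>k<a. f k) + (\<Sum>k<b. f (a + k))"
  by (induction b) (auto simp: add.assoc)

lemma sum_triangle: "2 * (\<Sum>k<a. k + 1) = a * (a + 1::nat)"
  by (induction a) auto
lemma sum_triangle_rev: "2 * (\<Sum>k<a. a - k) = a * (a + 1::nat)"
proof (induction a)
  case (Suc a)
  have "(\<Sum>k<Suc a. Suc a - k) = (\<Sum>k<a. Suc a - k) + 1" by simp
  also have "(\<Sum>k<a. Suc a - k) = (\<Sum>k<a. (a - k) + 1)" by (rule sum.cong) auto
  also have "\<dots> = (\<Sum>k<a. a - k) + (\<Sum>k<a. 1)" by (rule sum.distrib)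
  also have "(\<Sum>k<a. (1::nat)) = a" by simp
  finally show ?case using Suc by simp
qed simp

lemma sum_stage_len: assumes mn: "m \<le> n" and m1: "1 \<le> m"
  shows "(\<Sum>k<n + m - 1. stage_len n m k) = n * m"
proof -
  obtain m' where m': "m = Suc m'" using m1 by (cases m) auto
  have N: "n + m - 1 = m + (n - m) + m'" using mn m' by simp
  have s1: "(\<Sum>k<m. stage_len n m k) = (\<Sum>k<m. k + 1)" by (rule sum.cong) (auto simp: stage_len_def)
  have s2: "(\<Sum>k<n - m. stage_len n m (m + k)) = (\<Sum>k<n - m. m)"
    by (rule sum.cong) (auto simp: stage_len_def)
  have s3: "(\<Sum>k<m'. stage_len n m (m + (n - m) + k)) = (\<Sum>k<m'. m' - k)"
    by (rule sum.cong) (use mn m' in \<open>auto simp: stage_len_def\<close>)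
  define S1 where "S1 = (\<Sum>k<m. k + 1)"
  define S3 where "S3 = (\<Sum>k<m'. m' - k)"
  have tot: "(\<Sum>k<n + m - 1. stage_len n m k) = S1 + (n - m) * m + S3"
    unfolding N sum_lessThan_add s1 s2 s3 S1_def S3_def by (simp add: mult.commute)
  have "2 * (S1 + S3) = 2 * (m * m)"
    using sum_triangle[of m] sum_triangle_rev[of m'] m' unfolding S1_def S3_def
      by (simp add: algebra_simps)
  then have e: "S1 + S3 = m * m" by simp
  have "(n - m) * m + m * m = n * m"
    using mn by (metis add.commute le_add_diff_inverse2 distrib_right)
  then show ?thesis using tot e by simp
qed

lemma is_path_singleton: "is_path [x]" by (simp add: is_path_def)

lemma is_path_append:
  assumes "is_path xs" "is_path ys" "legal_move (last xs) (hd ys)"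
  shows "is_path (xs @ ys)"
proof -
  have ne: "xs \<noteq> []" "ys \<noteq> []" using assms by (auto simp: is_path_def)
  show ?thesis unfolding is_path_def
  proof (intro conjI allI impI)
    show "xs @ ys \<noteq> []" using ne by simp
    fix k assume k: "Suc k < length (xs @ ys)"
    consider (a) "Suc k < length xs" | (b) "Suc k = length xs" | (c) "length xs \<le> k" by linarith
    then show "legal_move ((xs @ ys) ! k) ((xs @ ys) ! Suc k)"
    proof cases
      case a then show ?thesis using assms(1) by (simp add: is_path_def nth_append)
    next
      case b
      have kk: "k = length xs - 1" using b by simp
      have "(xs @ ys) ! k = last xs" using b ne kk by (simp add: nth_append last_conv_nth)
      moreover have "(xs @ ys) ! Suc k = hd ys" using b ne by (simp add: nth_append hd_conv_nth)
      ultimately show ?thesis using assms(3) by simp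
    next
      case c
      have "Suc (k - length xs) < length ys" using k c by simp
      then have "legal_move (ys ! (k - length xs)) (ys ! Suc (k - length xs))"
        using assms(2) by (simp add: is_path_def)
      moreover have "Suc k - length xs = Suc (k - length xs)" using c by simp
      ultimately show ?thesis using c by (simp add: nth_append)
    qed
  qed
qed

lemma is_path_map:
  assumes "\<And>t. t < L \<Longrightarrow> legal_move (f t) (f (Suc t))"
  shows "is_path (map f [0..<Suc L])"
  unfolding is_path_def
proof (intro conjI allI impI)
  show "map f [0..<Suc L] \<noteq> []" by simp
  fix k assume k: "Suc k < length (map f [0..<Suc L])"
  then have "k < L" by simp
  moreover have "map f [0..<Suc L] ! k = f k" "map f [0..<Suc L] ! Suc k = f (Suc k)"
    using k by (simp_all del: upt_Suc)
  ultimately show "legal_move (map f [0..<Suc L] ! k) (map f [0..<Suc L] ! Suc k)"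
    using assms by simp
qed

lemma length_stage_left: "length (stage_left n k) = (n - 1 - k) + (k + 1 - n)"
  by (simp add: stage_left_def)
lemma length_stage_right: "length (stage_right m k) = (m - 1 - k) + (k + 1 - m)"
  by (simp add: stage_right_def)

lemma length_stage_core:
  "m \<le> n \<Longrightarrow> k < n + m - 1 \<Longrightarrow>
   length (stage_left n k) + 2 * stage_len n m k + length (stage_right m k) = n + m"
  by (auto simp: length_stage_left length_stage_right stage_len_def)

lemma length_stage_word:
  "m \<le> n \<Longrightarrow> k < n + m - 1 \<Longrightarrow> t \<le> stage_len n m k \<Longrightarrow> length (stage_word n m k t) = n + m"
  using length_stage_core[of m n k] by (auto simp: stage_word_def)

lemma stage_gap_le: "m \<le> n \<Longrightarrow> k < n + m - 1 \<Longrightarrow> t \<le> stage_len n m k \<Longrightarrow> stage_gap n m k t \<le> n + m"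
  using length_stage_core[of m n k] by (auto simp: stage_gap_def)

lemma stage_facts:
  shows "stage n m k \<noteq> []" "hd (stage n m k) = insert_vac (stage_word n m k 0) (stage_gap n m k 0)"
    "last (stage n m k) =
       insert_vac (stage_word n m k (stage_len n m k)) (stage_gap n m k (stage_len n m k))"
    "is_path (stage n m k)" "length (stage n m k) = Suc (stage_len n m k)"
proof -
  show "stage n m k \<noteq> []" by (simp add: stage_def)
  show "hd (stage n m k) = insert_vac (stage_word n m k 0) (stage_gap n m k 0)"
    by (simp add: stage_def hd_map del: upt_Suc)
  show "last (stage n m k) =
      insert_vac (stage_word n m k (stage_len n m k)) (stage_gap n m k (stage_len n m k))"
    by (simp add: stage_def last_map)
  show "is_path (stage n m k)" unfolding stage_def by (rule is_path_map) (rule stage_legal_move)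
  show "length (stage n m k) = Suc (stage_len n m k)" by (simp add: stage_def)
qed

lemma stage_gap_transition: "m \<le> n \<Longrightarrow> 1 \<le> m \<Longrightarrow> Suc k < n + m - 1 \<Longrightarrow>
   stage_gap n m (Suc k) 0 = Suc (stage_gap n m k (stage_len n m k)) \<or>
   Suc (stage_gap n m (Suc k) 0) = stage_gap n m k (stage_len n m k)"
  by (auto simp: stage_gap_def length_stage_left stage_len_def)

lemma stage_transition_legal:
  assumes mn: "m \<le> n" and m1: "1 \<le> m" and k: "Suc k < n + m - 1"
  shows "legal_move (last (stage n m k)) (hd (stage n m (Suc k)))"
proof -
  let ?W = "stage_left n k @ wb_pow (stage_len n m k) @ stage_right m k"
  have w1: "stage_word n m k (stage_len n m k) = ?W" by (rule stage_word_last)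
  have w2: "stage_word n m (Suc k) 0 = ?W"
    using stage_word_first stage_word_transition[OF mn m1 k] by simp
  have nv: "Vac \<notin> set ?W" using Vac_notin_stage_word w1 by metis
  have lw: "length ?W = n + m" using length_stage_word[OF mn, of k "stage_len n m k"] k w1 by simp
  have g1: "stage_gap n m k (stage_len n m k) \<le> n + m"
    using stage_gap_le[OF mn, of k "stage_len n m k"] k by simp
  have g2: "stage_gap n m (Suc k) 0 \<le> n + m" using stage_gap_le[OF mn k, of 0] by simp
  from stage_gap_transition[OF mn m1 k] show ?thesis
  proof
    assume e: "stage_gap n m (Suc k) 0 = Suc (stage_gap n m k (stage_len n m k))"
    have "legal_move (insert_vac ?W (stage_gap n m k (stage_len n m k)))
        (insert_vac ?W (Suc (stage_gap n m k (stage_len n m k))))"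
      by (rule legal_slide_right[OF nv]) (use g2 e lw in simp)
    then show ?thesis using e w1 w2 by (simp add: stage_facts)
  next
    assume e: "Suc (stage_gap n m (Suc k) 0) = stage_gap n m k (stage_len n m k)"
    have "legal_move (insert_vac ?W (stage_gap n m k (stage_len n m k)))
        (insert_vac ?W (stage_gap n m k (stage_len n m k) - 1))"
      by (rule legal_slide_left[OF nv]) (use g1 e lw in auto)
    moreover have "stage_gap n m (Suc k) 0 = stage_gap n m k (stage_len n m k) - 1" using e by simp
    ultimately show ?thesis using w1 w2 by (simp add: stage_facts)
  qed
qed

definition stages :: "nat \<Rightarrow> nat \<Rightarrow> nat \<Rightarrow> config list" where
  "stages n m k = concat (map (stage n m) [0..<k])"

lemma stages_path:
  assumes mn: "m \<le> n" and m1: "1 \<le> m" and k1: "1 \<le> k" and kN: "k \<le> n + m - 1"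
  shows "is_path (stages n m k) \<and> stages n m k \<noteq> [] \<and> hd (stages n m k) = hd (stage n m 0)
     \<and> last (stages n m k) = last (stage n m (k - 1))"
  using k1 kN
proof (induction k rule: dec_induct)
  case base
  then show ?case using stage_facts[of n m 0] by (simp add: stages_def)
next
  case (step k)
  have e: "stages n m (Suc k) = stages n m k @ stage n m k" by (simp add: stages_def)
  have IH: "is_path (stages n m k) \<and> stages n m k \<noteq> [] \<and> hd (stages n m k) = hd (stage n m 0)
     \<and> last (stages n m k) = last (stage n m (k - 1))" using step by simp
  have kk: "Suc (k - 1) = k" using step by simp
  have "legal_move (last (stage n m (k - 1))) (hd (stage n m (Suc (k - 1))))"
    by (rule stage_transition_legal[OF mn m1]) (use step in simp)
  then have lm: "legal_move (last (stages n m k)) (hd (stage n m k))" using IH kk by simp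
  have "is_path (stages n m (Suc k))" unfolding e
    by (rule is_path_append) (use IH lm stage_facts in auto)
  then show ?case using IH stage_facts[of n m k] by (simp add: e)
qed

lemma length_stages: "length (stages n m k) = (\<Sum>j<k. Suc (stage_len n m j))"
  by (induction k) (auto simp: stages_def stage_facts)

definition canonical :: "nat \<Rightarrow> nat \<Rightarrow> config list" where
  "canonical n m = init_config n m # stages n m (n + m - 1) @ [final_config n m]"

lemma stage_word_0_0:
  "1 \<le> n \<Longrightarrow> 1 \<le> m \<Longrightarrow>
   stage_word n m 0 0 = replicate n Blk @ replicate m Wht \<and> stage_gap n m 0 0 = n + 1"
proof -
  assume n: "1 \<le> n" and m: "1 \<le> m"
  have L: "stage_len n m 0 = 1" using m by (simp add: stage_len_def)
  have X: "stage_left n 0 = replicate (n - 1) Blk" using n by (simp add: stage_left_def)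
  have Y: "stage_right m 0 = replicate (m - 1) Wht" using m by (simp add: stage_right_def)
  obtain n' where n': "n = Suc n'" using n by (cases n) auto
  obtain m' where m': "m = Suc m'" using m by (cases m) auto
  have a: "replicate (n - 1) Blk @ [Blk] = replicate n Blk"
    using n' by (simp add: replicate_append_same)
  have b: "Wht # replicate (m - 1) Wht = replicate m Wht" using m' by simp
  show ?thesis using a b n by (simp add: stage_word_def stage_gap_def L X Y bw_pow_Suc)
qed

lemma stage_word_final:
  "m \<le> n \<Longrightarrow> 2 \<le> m \<Longrightarrow>
   stage_word n m (n + m - 2) (stage_len n m (n + m - 2)) = replicate m Wht @ replicate n Blk \<and>
   (stage_gap n m (n + m - 2) (stage_len n m (n + m - 2)) = m - 1 \<or>
    stage_gap n m (n + m - 2) (stage_len n m (n + m - 2)) = m + 1)"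
proof -
  assume mn: "m \<le> n" and m: "2 \<le> m"
  let ?k = "n + m - 2"
  have L: "stage_len n m ?k = 1" using mn m by (simp add: stage_len_def)
  have X: "stage_left n ?k = replicate (m - 1) Wht" using mn m by (simp add: stage_left_def)
  have Y: "stage_right m ?k = replicate (n - 1) Blk" using mn m by (simp add: stage_right_def)
  obtain n' where n': "n = Suc n'" using mn m by (cases n) auto
  obtain m' where m': "m = Suc m'" using m by (cases m) auto
  have a: "replicate (m - 1) Wht @ [Wht] = replicate m Wht"
    using m' by (simp add: replicate_append_same)
  have b: "Blk # replicate (n - 1) Blk = replicate n Blk" using n' by simp
  have "stage_word n m ?k 1 = replicate m Wht @ replicate n Blk"
    using a b by (simp add: stage_word_def X Y L wb_pow_Suc)
  moreover have "stage_gap n m ?k 1 = m - 1 \<or> stage_gap n m ?k 1 = m + 1"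
    using m by (simp add: stage_gap_def X L)
  ultimately show ?thesis using L by simp
qed

lemma canonical_solution:
  assumes mn: "m \<le> n" and m2: "2 \<le> m"
  shows "solution n m (canonical n m)"
proof -
  have m1: "1 \<le> m" and n1: "1 \<le> n" using mn m2 by auto
  let ?N = "n + m - 1"
  have ch: "is_path (stages n m ?N) \<and> stages n m ?N \<noteq> [] \<and> hd (stages n m ?N) = hd (stage n m 0)
     \<and> last (stages n m ?N) = last (stage n m (?N - 1))"
    using stages_path[OF mn m1, of ?N] m1 n1 by simp
  have N1: "?N - 1 = n + m - 2" by simp
  note sl = stage_word_final[OF mn m2]
  have nvf: "Vac \<notin> set (replicate m Wht @ replicate n Blk)" by auto
  have l1: "legal_move (last (stages n m ?N)) (final_config n m)"
  proof -
    have e: "last (stages n m ?N) =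
        insert_vac (replicate m Wht @ replicate n Blk) (stage_gap n m (n + m - 2) (stage_len n m (n + m - 2)))"
      using ch N1 sl stage_facts(3) by simp
    from conjunct2[OF sl] show ?thesis
    proof
      assume "stage_gap n m (n + m - 2) (stage_len n m (n + m - 2)) = m - 1"
      then show ?thesis
        using e final_config_eq[of n m] legal_slide_right[OF nvf, of "m - 1"] m1 by simp
    next
      assume "stage_gap n m (n + m - 2) (stage_len n m (n + m - 2)) = m + 1"
      then show ?thesis
        using e final_config_eq[of n m] legal_slide_left[OF nvf, of "m + 1"] n1 by simp
    qed
  qed
  have p2: "is_path (stages n m ?N @ [final_config n m])"
    by (rule is_path_append) (use ch is_path_singleton l1 in auto)
  have nvs: "Vac \<notin> set (replicate n Blk @ replicate m Wht)" by auto
  have l0: "legal_move (init_config n m) (hd (stages n m ?N @ [final_config n m]))"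
  proof -
    have "hd (stages n m ?N @ [final_config n m]) =
        insert_vac (replicate n Blk @ replicate m Wht) (Suc n)"
      using ch stage_word_0_0[OF n1 m1] stage_facts(2) by simp
    then show ?thesis using init_config_eq[of n m] legal_slide_right[OF nvs, of n] m1 by simp
  qed
  have "is_path ([init_config n m] @ stages n m ?N @ [final_config n m])"
    by (rule is_path_append) (use is_path_singleton p2 l0 in auto)
  then show ?thesis by (simp add: solution_def canonical_def)
qed

lemma length_canonical:
  assumes mn: "m \<le> n" and m1: "1 \<le> m"
  shows "length (canonical n m) = n * m + n + m + 1"
proof -
  have "(\<Sum>j<n + m - 1. Suc (stage_len n m j)) = (\<Sum>j<n + m - 1. stage_len n m j + 1)" by simp
  also have "\<dots> = (\<Sum>j<n + m - 1. stage_len n m j) + (\<Sum>j<n + m - 1. 1)" by (rule sum.distrib)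
  finally have "length (stages n m (n + m - 1)) = (\<Sum>j<n + m - 1. stage_len n m j) + (n + m - 1)"
    by (simp add: length_stages)
  then show ?thesis using sum_stage_len[OF mn m1] m1 by (simp add: canonical_def)
qed

lemma canonical_1:
  assumes mn: "m \<le> n" and m1: "1 \<le> m"
  shows "canonical n m ! 1 = first_move_config n m"
proof -
  have n1: "1 \<le> n" using mn m1 by simp
  have ch: "stages n m (n + m - 1) \<noteq> [] \<and> hd (stages n m (n + m - 1)) = hd (stage n m 0)"
    using stages_path[OF mn m1, of "n + m - 1"] m1 n1 by simp
  have "canonical n m ! 1 = (stages n m (n + m - 1) @ [final_config n m]) ! 0"
    by (simp add: canonical_def)
  also have "\<dots> = hd (stages n m (n + m - 1))"
    using conjunct1[OF ch] by (simp add: nth_append hd_conv_nth)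
  also have "\<dots> = insert_vac (replicate n Blk @ replicate m Wht) (Suc n)"
    using ch stage_word_0_0[OF n1 m1] stage_facts(2) by simp
  also have "\<dots> = first_move_config n m"
  proof -
    obtain m' where m': "m = Suc m'" using m1 by (cases m) auto
    show ?thesis using m' by (simp add: insert_vac_def first_move_config_def)
  qed
  finally show ?thesis .
qed

lemma nu_eq_stage_last:
  assumes mn: "m \<le> n" and t1: "1 \<le> t" and tm: "t < m"
  shows "nu n m t = last (stage n m (t + n - 1))"
proof -
  define k where "k = t + n - 1"
  have L: "stage_len n m k = m - t" using mn t1 tm by (simp add: stage_len_def k_def)
  have X: "stage_left n k = replicate t Wht" using t1 by (simp add: stage_left_def k_def)
  have Y: "stage_right m k = replicate (n - m + t) Blk"
    using mn t1 tm by (simp add: stage_right_def k_def)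
  have last: "last (stage n m k) =
      insert_vac (replicate t Wht @ wb_pow (m - t) @ replicate (n - m + t) Blk) (stage_gap n m k (m - t))"
    using stage_facts(3)[of n m k] stage_word_last[of n m k] L X Y by simp
  have par: "even k \<longleftrightarrow> odd (n + t)" using t1 unfolding k_def by (cases t) auto
  show ?thesis
  proof (cases "even (n + t)")
    case True
    then have ok: "odd k" using par by simp
    have "stage_gap n m k (m - t) = length (stage_left n k) + 2 * (m - t)"
      using ok by (simp add: stage_gap_def)
    then have "stage_gap n m k (m - t) = length (replicate t Wht @ wb_pow (m - t))" using X by simp
    then show ?thesis
      using True last insert_vac_append[of "replicate t Wht @ wb_pow (m - t)"]
      by (simp add: nu_def k_def)
  next
    case False
    then have ek: "even k" using par by simp
    have "stage_gap n m k (m - t) = length (stage_left n k) + 2 * (stage_len n m k - (m - t))"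
      using ek by (simp add: stage_gap_def)
    then have "stage_gap n m k (m - t) = length (replicate t Wht)" using X L by simp
    then show ?thesis
      using False last insert_vac_append[of "replicate t Wht"] by (simp add: nu_def k_def)
  qed
qed

lemma nu_m: "m \<le> n \<Longrightarrow> nu n m m = final_config n m"
  by (simp add: nu_def final_config_def)

lemma canonical_nu_order:
  assumes mn: "m \<le> n" and m2: "2 \<le> m" and i: "1 \<le> i" "i < m"
  obtains a b where "a < b" "b < length (canonical n m)"
    "canonical n m ! a = nu n m i" "canonical n m ! b = nu n m (i + 1)"
proof -
  let ?N = "n + m - 1"
  have "[0..<?N] = [0..<i + n] @ [i + n..<?N]"
    using upt_add_eq_append[of 0 "i + n" "?N - (i + n)"] i by simp
  then have split: "canonical n m = (init_config n m # stages n m (i + n)) @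
      (concat (map (stage n m) [i + n..<?N]) @ [final_config n m])" (is "_ = ?P1 @ ?P2")
    by (simp add: canonical_def stages_def)
  have "last (stage n m (i + n - 1)) \<in> set (stage n m (i + n - 1))"
    using stage_facts(1) by simp
  moreover have "i + n - 1 \<in> set [0..<i + n]" using i by simp
  ultimately have "nu n m i \<in> set ?P1" unfolding nu_eq_stage_last[OF mn i] stages_def by auto
  then obtain a where a: "a < length ?P1" "?P1 ! a = nu n m i"
    unfolding in_set_conv_nth by blast
  have "nu n m (i + 1) \<in> set ?P2"
  proof (cases "i + 1 < m")
    case True
    have "last (stage n m (i + n)) \<in> set (stage n m (i + n))" using stage_facts(1) by simp
    moreover have "i + n \<in> set [i + n..<?N]" using True by simp
    ultimately show ?thesis using nu_eq_stage_last[OF mn _ True] by auto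
  next
    case False
    then have "i + 1 = m" using i by simp
    then show ?thesis using nu_m[OF mn] by simp
  qed
  then obtain b where b: "b < length ?P2" "?P2 ! b = nu n m (i + 1)"
    unfolding in_set_conv_nth by blast
  show ?thesis
  proof (rule that[of a "length ?P1 + b"])
    show "canonical n m ! a = nu n m i" unfolding split nth_append_left[OF a(1)] by (rule a(2))
    show "canonical n m ! (length ?P1 + b) = nu n m (i + 1)"
      unfolding split nth_append_length_plus by (rule b(2))
  qed (use a b split in simp_all)
qed

lemma nu_in_canonical:
  assumes "m \<le> n" "2 \<le> m" "1 \<le> t" "t \<le> m"
  shows "nu n m t \<in> set (canonical n m)"
proof (cases "t = m")
  case True
  then show ?thesis using nu_m[OF assms(1)] by (simp add: canonical_def)
next
  case False
  then obtain a b where "a < b" "b < length (canonical n m)" "canonical n m ! a = nu n m t"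
    using canonical_nu_order[OF assms(1,2,3)] assms(4) by (metis le_neq_implies_less)
  then show ?thesis using nth_mem[of a "canonical n m"] by simp
qed

lemma distinct_canonical:
  assumes "m \<le> n" "2 \<le> m"
  shows "distinct (canonical n m)"
  unfolding distinct_conv_nth
proof (intro allI impI)
  fix i j assume ij: "i < length (canonical n m)" "j < length (canonical n m)" "i \<noteq> j"
  have psi: "psi n m (canonical n m ! k) = int k" if "k < length (canonical n m)" for k
    using optimal_potentials[OF canonical_solution[OF assms] _ _ length_canonical that] assms
      by simp
  show "canonical n m ! i \<noteq> canonical n m ! j"
    using psi[OF ij(1)] psi[OF ij(2)] ij(3) by auto
qed

lemma optimal_solution_length:
  assumes "m \<le> n" "2 \<le> m" "optimal_solution n m p"
  shows "length p = n * m + n + m + 1"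
proof -
  have "length p \<le> length (canonical n m)"
    using assms(3) canonical_solution[OF assms(1,2)] by (simp add: optimal_solution_def)
  moreover have "n * m + n + m + 1 \<le> length p"
    using solution_length[of n m p] assms by (simp add: optimal_solution_def)
  ultimately show ?thesis using length_canonical[OF assms(1)] assms(2) by simp
qed

lemma optimal_solution_forward:
  assumes mn: "m \<le> n" and m2: "2 \<le> m" and opt: "optimal_solution n m p"
    and k: "1 \<le> k" "Suc k < length p"
    and x: "p ! k = insert_vac ws g" and w: "word n m ws" and g: "g \<le> n + m"
  shows "tight_config n m ws g" "tight_config.forward n m ws g (p ! Suc k)"
proof -
  let ?T = "n * m + n + m"
  have sol: "solution n m p" using opt by (simp add: optimal_solution_def)
  have len: "length p = ?T + 1" using optimal_solution_length[OF mn m2 opt] .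
  have n1: "1 \<le> n" and m1: "1 \<le> m" using mn m2 by auto
  note pot = optimal_potentials[OF sol n1 m1 len]
  have P: "psi_w n m ws g = int k" "phi_w n m ws g = int (?T - k)"
    using pot[of k] k x psi_insert_vac[OF w g] phi_insert_vac[OF w g] by auto
  have "1 \<le> ?T - k" using k len by simp
  then have phi1: "1 \<le> phi_w n m ws g" unfolding P(2) by (metis of_nat_1 of_nat_le_iff)
  show tc: "tight_config n m ws g"
  proof
    show "2 \<le> n" "2 \<le> m" "word n m ws" "g \<le> n + m" using mn m2 w g by auto
    show "psi_w n m ws g + phi_w n m ws g = int ?T" unfolding P using \<open>1 \<le> ?T - k\<close> by simp
    show "1 \<le> psi_w n m ws g" using P(1) k by simp
  qed (rule phi1)
  have "legal_move (p ! k) (p ! Suc k)" using sol k by (simp add: solution_def is_path_def)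
  moreover have "psi n m (p ! Suc k) = int (Suc k)" "phi n m (p ! Suc k) = int (?T - Suc k)"
    using pot[of "Suc k"] k by auto
  ultimately show "tight_config.forward n m ws g (p ! Suc k)"
    using P x k len by (simp add: tight_config.forward_def[OF tc])
qed

lemma optimal_solution_unique:
  assumes mn: "m \<le> n" and m2: "2 \<le> m" and opt: "optimal_solution n m p"
    and first: "p ! 1 = first_move_config n m"
  shows "p = canonical n m"
proof -
  have opt_c: "optimal_solution n m (canonical n m)"
    using canonical_solution[OF mn m2] length_canonical[OF mn] solution_length[of n m] mn m2
    by (auto simp: optimal_solution_def)
  have len: "length p = length (canonical n m)"
    using optimal_solution_length[OF mn m2] opt opt_c by simp
  have path: "is_path p" "hd p = init_config n m"
    using opt by (auto simp: optimal_solution_def solution_def)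
  have "p ! k = canonical n m ! k" if "k < length p" for k
    using that
  proof (induction k)
    case 0
    then show ?case
      using opt opt_c solution_ends(2)[of n m p] solution_ends(2)[of n m "canonical n m"]
      by (simp add: optimal_solution_def)
  next
    case (Suc k)
    show ?case
    proof (cases "k = 0")
      case True
      then show ?thesis using first canonical_1[OF mn] m2 by simp
    next
      case False
      obtain ws g where x: "p ! k = insert_vac ws g" and w: "word n m ws" and g: "g \<le> n + m"
        using path_valid_config[OF path, of k] Suc.prems by (auto simp: valid_config_def)
      have k: "1 \<le> k" "Suc k < length p" using False Suc.prems by auto
      note fw = optimal_solution_forward[OF mn m2 opt k x w g]
      have "tight_config.forward n m ws g (canonical n m ! Suc k)"
        using optimal_solution_forward(2)[OF mn m2 opt_c, of k ws g] k len x w g Suc by simp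
      then show ?thesis using tight_config.forward_unique[OF fw] by simp
    qed
  qed
  then show ?thesis using len by (simp add: list_eq_iff_nth_eq)
qed

theorem lemma10:
  fixes n m :: nat
  assumes "2 \<le> m" and "m \<le> n"
  shows "(\<forall>p. optimal_solution n m p \<and> p ! 1 = first_move_config n m \<longrightarrow>
            (\<forall>t. 1 \<le> t \<and> t \<le> m \<longrightarrow> (\<exists>k < length p. p ! k = nu n m t)))
       \<and> (\<forall>p q i a b c d.
            optimal_solution n m p \<and> p ! 1 = first_move_config n m \<and>
            optimal_solution n m q \<and> q ! 1 = first_move_config n m \<and>
            1 \<le> i \<and> i < m \<and>
            a < length p \<and> b < length p \<and> p ! a = nu n m i \<and> p ! b = nu n m (i + 1) \<and>
            c < length q \<and> d < length q \<and> q ! c = nu n m i \<and> q ! d = nu n m (i + 1)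
            \<longrightarrow> a < b \<and> c < d \<and> drop a (take (Suc b) p) = drop c (take (Suc d) q))"
proof (rule conjI; intro allI impI)
  fix p t
  assume "optimal_solution n m p \<and> p ! 1 = first_move_config n m" "1 \<le> t \<and> t \<le> m"
  then show "\<exists>k < length p. p ! k = nu n m t"
    using optimal_solution_unique nu_in_canonical assms by (metis in_set_conv_nth)
next
  fix p q i a b c d
  assume h: "optimal_solution n m p \<and> p ! 1 = first_move_config n m \<and>
    optimal_solution n m q \<and> q ! 1 = first_move_config n m \<and> 1 \<le> i \<and> i < m \<and>
    a < length p \<and> b < length p \<and> p ! a = nu n m i \<and> p ! b = nu n m (i + 1) \<and>
    c < length q \<and> d < length q \<and> q ! c = nu n m i \<and> q ! d = nu n m (i + 1)"
  then have pq: "p = canonical n m" "q = canonical n m"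
    using optimal_solution_unique assms by blast+
  obtain a' b' where ab: "a' < b'" "b' < length (canonical n m)"
    "canonical n m ! a' = nu n m i" "canonical n m ! b' = nu n m (i + 1)"
    using canonical_nu_order[OF assms(2,1)] h by blast
  note index_eq = nth_eq_iff_index_eq[OF distinct_canonical[OF assms(2,1)]]
  have "a = a'" "b = b'" "c = a'" "d = b'"
    using index_eq[of a a'] index_eq[of b b'] index_eq[of c a'] index_eq[of d b'] h ab pq by auto
  then show "a < b \<and> c < d \<and> drop a (take (Suc b) p) = drop c (take (Suc d) q)"
    using ab pq by simp
qed

end
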